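(* Let $\pi_0$ be an irreducible representation of $\mathrm{SO}(V)$ (if $d$ is even, assume $\mathrm{char}\,\mathcal C\ne2$). Then $$\Gamma(\pi_0,\chi)=\chi(-2)^{-d}\,j(\pi_0,\chi)\cdot\begin{cases}\omega_{\pi_0}(-1)&d\text{ even},\\1&d\text{ odd},\end{cases}$$ where $j(\pi_0,\chi)\,\mathrm{id}_{\pi_0}=|\mathfrak g|^{-1/2}\sum_{g\in\mathrm{SO}(V),\,\det(\mathrm{id}+g)\ne0}\chi(\det(\mathrm{id}_V+g))\pi_0(g)$.
   Context: Let $\mathbb F$ be a finite field of odd cardinality $q$ and $\mathcal C$ an algebraically closed field of characteristic not dividing $q$ with fixed $\sqrt q$. Let $(V,\langle\cdot,\cdot\rangle)$ be a nondegenerate symmetric bilinear space over $\mathbb F$ of dimension $d$, $G(V)=\mathrm O(V)$, $\mathrm{SO}(V)=\{g\in\mathrm O(V):\det g=1\}$, $\mathfrak g$ the Lie algebra of $\mathrm O(V)$, $\chi:\mathbb F^\times\to\mathcal C^\times$ a character. For an irreducible representation $\pi$ of $\mathrm O(V)$, $\Gamma(\pi,\chi)$ is defined as follows. Doubling: $V^\square=V^+\oplus V^-$ with form $\langle v_1,v_2\rangle-\langle w_1,w_2\rangle$ on $v_1^++w_1^-,v_2^++w_2^-$; $V^\Delta=\{v^++v^-\}$; $\iota(g_1,g_2)(v^++w^-)=(g_1v)^++(g_2w)^-$; $P_V$ the stabilizer of $V^\Delta$ in $\mathrm O(V^\square)$, $N_V$ its unipotent radical, $w_V=\iota(\mathrm{id},-\mathrm{id})$;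 $I_V(\mu)=\{f:f(pg)=\mu(\det(p|_{V^\Delta}))f(g),\,p\in P_V\}$; $(M_V(\chi)f)(g)=|\mathfrak g|^{-1/2}\sum_{u\in N_V}f(w_Vug)$ maps $I_V(\chi)\to I_V(\chi^{-1})$; $Z_{V,\mu,\pi}(f)=\sum_{g\in\mathrm O(V)}f(\iota(g,\mathrm{id}))\pi(g)$; $f_{0,V}\in I_V(\chi)$ is supported on $P_V$ with $f_{0,V}(\mathrm{id})=1$; and $\Gamma(\pi,\chi)\,\mathrm{id}_\pi=Z_{V,\chi^{-1},\pi}(M_V(\chi)f_{0,V})$. Extension to $\mathrm{SO}(V)$: if $d$ is odd, $\Gamma(\pi_0,\chi):=\Gamma(\pi_0^+,\chi)$ where $\pi_0^+$ is the extension of $\pi_0$ to $\mathrm O(V)=\{\pm\mathrm{id}\}\times\mathrm{SO}(V)$ with $\pi_0^+(-\mathrm{id})=\mathrm{id}$. If $d$ is even: if $\pi_0$ extends to an irreducible representation $\pi_0'$ of $\mathrm O(V)$, $\Gamma(\pi_0,\chi):=\Gamma(\pi_0',\chi)$ (independent of the extension); otherwise $\Gamma(\pi_0,\chi):=\Gamma(\mathrm{Ind}_{\mathrm{SO}(V)}^{\mathrm O(V)}\pi_0,\chi)$ (this induced representation is irreducible). $\omega_{\pi_0}$ is the central character of $\pi_0$. *)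

theory Defs
  imports "HOL-Analysis.Analysis" "HOL-Computational_Algebra.Polynomial"
begin

definition orth_group :: "'f::field^'n::finite^'n \<Rightarrow> ('f^'n^'n) set" where
  "orth_group B = {g. transpose g ** B ** g = B}"

definition sorth_group :: "'f::field^'n::finite^'n \<Rightarrow> ('f^'n^'n) set" where
  "sorth_group B = {g \<in> orth_group B. det g = 1}"

definition lie_orth :: "'f::field^'n::finite^'n \<Rightarrow> ('f^'n^'n) set" where
  "lie_orth B = {X. transpose X ** B + B ** X = 0}"

(* |g|^(1/2), computed with the fixed square root sq of q: |g| = q^k, |g|^(1/2) = sq^k *)
definition lie_sqrt_card :: "'f::{finite,field}^'n::finite^'n \<Rightarrow> 'c::field \<Rightarrow> 'c" where
  "lie_sqrt_card B sq = sq ^ (THE k. card (lie_orth B) = CARD('f) ^ k)"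

(* ---------- Doubling V^sq = V^+ \<oplus> V^-, coordinates indexed by 'n + 'n ---------- *)

definition dbl_form :: "'f::field^'n::finite^'n \<Rightarrow> 'f^('n+'n)^('n+'n)" where
  "dbl_form B = (\<chi> a b. case (a, b) of
       (Inl i, Inl j) \<Rightarrow> B $ i $ j
     | (Inr i, Inr j) \<Rightarrow> - (B $ i $ j)
     | _ \<Rightarrow> 0)"

definition iota :: "'f::field^'n::finite^'n \<Rightarrow> 'f^'n^'n \<Rightarrow> 'f^('n+'n)^('n+'n)" where
  "iota g1 g2 = (\<chi> a b. case (a, b) of
       (Inl i, Inl j) \<Rightarrow> g1 $ i $ j
     | (Inr i, Inr j) \<Rightarrow> g2 $ i $ j
     | _ \<Rightarrow> 0)"

definition diag_emb :: "'f::field^'n::finite \<Rightarrow> 'f^('n+'n)" where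
  "diag_emb v = (\<chi> a. case a of Inl i \<Rightarrow> v $ i | Inr i \<Rightarrow> v $ i)"

definition V_Delta :: "('f::field^('n::finite+'n)) set" where
  "V_Delta = range diag_emb"

definition P_V :: "'f::field^'n::finite^'n \<Rightarrow> ('f^('n+'n)^('n+'n)) set" where
  "P_V B = {p \<in> orth_group (dbl_form B). \<forall>v. p *v diag_emb v \<in> V_Delta}"

(* unipotent radical of the stabiliser of the Lagrangian V^Delta: elements acting
   trivially on V^Delta and on V^sq / V^Delta *)
definition N_V :: "'f::field^'n::finite^'n \<Rightarrow> ('f^('n+'n)^('n+'n)) set" where
  "N_V B = {p \<in> P_V B. (\<forall>v. p *v diag_emb v = diag_emb v) \<and> (\<forall>x. p *v x - x \<in> V_Delta)}"

definition w_V :: "('f::field^('n::finite+'n)^('n+'n))" where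
  "w_V = iota (mat 1) (mat (-1))"

(* matrix of p|_{V^Delta} w.r.t. the identification V \<cong> V^Delta, v \<mapsto> v^+ + v^- *)
definition restr_Delta :: "'f::field^('n::finite+'n)^('n+'n) \<Rightarrow> 'f^'n^'n" where
  "restr_Delta p = (\<chi> i j. (p *v diag_emb (axis j 1)) $ Inl i)"

definition det_Delta :: "'f::field^('n::finite+'n)^('n+'n) \<Rightarrow> 'f" where
  "det_Delta p = det (restr_Delta p)"

definition f0_V :: "'f::field^'n::finite^'n \<Rightarrow> ('f \<Rightarrow> 'c::field) \<Rightarrow> 'f^('n+'n)^('n+'n) \<Rightarrow> 'c" where
  "f0_V B chi g = (if g \<in> P_V B then chi (det_Delta g) else 0)"

definition M_V :: "'f::{finite,field}^'n::finite^'n \<Rightarrow> 'c::field \<Rightarrow>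
    ('f^('n+'n)^('n+'n) \<Rightarrow> 'c) \<Rightarrow> 'f^('n+'n)^('n+'n) \<Rightarrow> 'c" where
  "M_V B sq f g = inverse (lie_sqrt_card B sq) * (\<Sum>u\<in>N_V B. f (w_V ** u ** g))"

(* ---------- Representations over 'c, realised on a subspace W of 'x \<Rightarrow> 'c ---------- *)

definition csubspace :: "('x \<Rightarrow> 'c::field) set \<Rightarrow> bool" where
  "csubspace W \<longleftrightarrow> (\<lambda>_. 0) \<in> W \<and> (\<forall>f\<in>W. \<forall>h\<in>W. (\<lambda>x. f x + h x) \<in> W)
     \<and> (\<forall>c. \<forall>f\<in>W. (\<lambda>x. c * f x) \<in> W)"

definition is_rep :: "('f::field^'n::finite^'n) set \<Rightarrow> ('x \<Rightarrow> 'c::field) set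
    \<Rightarrow> ('f^'n^'n \<Rightarrow> ('x \<Rightarrow> 'c) \<Rightarrow> ('x \<Rightarrow> 'c)) \<Rightarrow> bool" where
  "is_rep G W \<rho> \<longleftrightarrow> csubspace W
     \<and> (\<forall>g\<in>G. \<forall>f\<in>W. \<rho> g f \<in> W)
     \<and> (\<forall>g\<in>G. \<forall>f\<in>W. \<forall>h\<in>W. \<rho> g (\<lambda>x. f x + h x) = (\<lambda>x. \<rho> g f x + \<rho> g h x))
     \<and> (\<forall>g\<in>G. \<forall>c. \<forall>f\<in>W. \<rho> g (\<lambda>x. c * f x) = (\<lambda>x. c * \<rho> g f x))
     \<and> (\<forall>f\<in>W. \<rho> (mat 1) f = f)
     \<and> (\<forall>g\<in>G. \<forall>h\<in>G. \<forall>f\<in>W. \<rho> (g ** h) f = \<rho> g (\<rho> h f))"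

definition irred_rep :: "('f::field^'n::finite^'n) set \<Rightarrow> ('x \<Rightarrow> 'c::field) set
    \<Rightarrow> ('f^'n^'n \<Rightarrow> ('x \<Rightarrow> 'c) \<Rightarrow> ('x \<Rightarrow> 'c)) \<Rightarrow> bool" where
  "irred_rep G W \<rho> \<longleftrightarrow> is_rep G W \<rho> \<and> W \<noteq> {\<lambda>_. 0}
     \<and> (\<forall>U. csubspace U \<and> U \<subseteq> W \<and> (\<forall>g\<in>G. \<forall>f\<in>U. \<rho> g f \<in> U)
            \<longrightarrow> U = {\<lambda>_. 0} \<or> U = W)"

definition scalar_of :: "('x \<Rightarrow> 'c::field) set \<Rightarrow> (('x \<Rightarrow> 'c) \<Rightarrow> ('x \<Rightarrow> 'c)) \<Rightarrow> 'c" where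
  "scalar_of W T = (THE c. \<forall>f\<in>W. T f = (\<lambda>x. c * f x))"

definition central_char :: "('x \<Rightarrow> 'c::field) set \<Rightarrow> ('f::field^'n::finite^'n \<Rightarrow> ('x \<Rightarrow> 'c) \<Rightarrow> ('x \<Rightarrow> 'c))
    \<Rightarrow> 'f^'n^'n \<Rightarrow> 'c" where
  "central_char W \<rho> z = scalar_of W (\<rho> z)"

definition Z_V :: "'f::field^'n::finite^'n \<Rightarrow> ('f^'n^'n \<Rightarrow> ('x \<Rightarrow> 'c::field) \<Rightarrow> ('x \<Rightarrow> 'c))
    \<Rightarrow> ('f^('n+'n)^('n+'n) \<Rightarrow> 'c) \<Rightarrow> ('x \<Rightarrow> 'c) \<Rightarrow> ('x \<Rightarrow> 'c)" where
  "Z_V B \<rho> f \<phi> = (\<lambda>x. \<Sum>g\<in>orth_group B. f (iota g (mat 1)) * \<rho> g \<phi> x)"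

definition Gamma_O :: "'f::{finite,field}^'n::finite^'n \<Rightarrow> 'c::field \<Rightarrow> ('f \<Rightarrow> 'c)
    \<Rightarrow> ('x \<Rightarrow> 'c) set \<Rightarrow> ('f^'n^'n \<Rightarrow> ('x \<Rightarrow> 'c) \<Rightarrow> ('x \<Rightarrow> 'c)) \<Rightarrow> 'c" where
  "Gamma_O B sq chi W \<rho> = scalar_of W (Z_V B \<rho> (M_V B sq (f0_V B chi)))"

(* Ind_{SO(V)}^{O(V)} pi_0, realised on functions O(V) \<times> 'x \<Rightarrow> 'c *)
definition ind_space :: "'f::field^'n::finite^'n \<Rightarrow> ('x \<Rightarrow> 'c::field) set
    \<Rightarrow> ('f^'n^'n \<Rightarrow> ('x \<Rightarrow> 'c) \<Rightarrow> ('x \<Rightarrow> 'c)) \<Rightarrow> ((('f^'n^'n) \<times> 'x) \<Rightarrow> 'c) set" where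
  "ind_space B W \<rho> = {F. (\<forall>g\<in>orth_group B. (\<lambda>x. F (g, x)) \<in> W)
      \<and> (\<forall>g. g \<notin> orth_group B \<longrightarrow> (\<lambda>x. F (g, x)) = (\<lambda>_. 0))
      \<and> (\<forall>h\<in>sorth_group B. \<forall>g\<in>orth_group B. (\<lambda>x. F (h ** g, x)) = \<rho> h (\<lambda>x. F (g, x)))}"

definition ind_act :: "'f::field^'n::finite^'n \<Rightarrow> 'f^'n^'n \<Rightarrow> ((('f^'n^'n) \<times> 'x) \<Rightarrow> 'c::field)
    \<Rightarrow> ((('f^'n^'n) \<times> 'x) \<Rightarrow> 'c)" where
  "ind_act B g F = (\<lambda>(g', x). if g' \<in> orth_group B then F (g' ** g, x) else 0)"

definition Gamma_SO :: "'f::{finite,field}^'n::finite^'n \<Rightarrow> 'c::field \<Rightarrow> ('f \<Rightarrow> 'c)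
    \<Rightarrow> ('x \<Rightarrow> 'c) set \<Rightarrow> ('f^'n^'n \<Rightarrow> ('x \<Rightarrow> 'c) \<Rightarrow> ('x \<Rightarrow> 'c)) \<Rightarrow> 'c" where
  "Gamma_SO B sq chi W \<rho> =
    (if odd CARD('n) then
       Gamma_O B sq chi W (SOME \<rho>'. is_rep (orth_group B) W \<rho>'
          \<and> (\<forall>g\<in>sorth_group B. \<forall>f\<in>W. \<rho>' g f = \<rho> g f)
          \<and> (\<forall>f\<in>W. \<rho>' (mat (-1)) f = f))
     else if (\<exists>\<rho>'. irred_rep (orth_group B) W \<rho>' \<and> (\<forall>g\<in>sorth_group B. \<forall>f\<in>W. \<rho>' g f = \<rho> g f)) then
       Gamma_O B sq chi W (SOME \<rho>'. irred_rep (orth_group B) W \<rho>'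
          \<and> (\<forall>g\<in>sorth_group B. \<forall>f\<in>W. \<rho>' g f = \<rho> g f))
     else Gamma_O B sq chi (ind_space B W \<rho>) (ind_act B))"

definition j_factor :: "'f::{finite,field}^'n::finite^'n \<Rightarrow> 'c::field \<Rightarrow> ('f \<Rightarrow> 'c)
    \<Rightarrow> ('x \<Rightarrow> 'c) set \<Rightarrow> ('f^'n^'n \<Rightarrow> ('x \<Rightarrow> 'c) \<Rightarrow> ('x \<Rightarrow> 'c)) \<Rightarrow> 'c" where
  "j_factor B sq chi W \<rho> = scalar_of W (\<lambda>\<phi> x. inverse (lie_sqrt_card B sq) *
      (\<Sum>g\<in>{g\<in>sorth_group B. det (mat 1 + g) \<noteq> 0}. chi (det (mat 1 + g)) * \<rho> g \<phi> x))"

end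

theory Submission
  imports Defs "HOL-Library.Function_Algebras"
begin

text \<open>
  The integrand \<open>g \<mapsto> (M\<^sub>V(\<chi>) f\<^sub>0)(\<iota>(g, 1))\<close> of the zeta integral is computed in closed form.
  Since \<open>f\<^sub>0\<close> is supported on \<open>P\<^sub>V\<close>, only the \<open>u \<in> N\<^sub>V\<close> with \<open>w\<^sub>V u \<iota>(g, 1) \<in> P\<^sub>V\<close> contribute.
  Such a \<open>u\<close> exists iff \<open>1 - g\<close> is invertible; it is then unique, given by a Cayley transform
  of \<open>g\<close>, and \<open>w\<^sub>V u \<iota>(g, 1)\<close> acts on \<open>V\<^sup>\<Delta>\<close> as \<open>(g - 1)/2\<close>. Hence the integrand is
  \<open>|\<g>|\<^sup>-\<^sup>1\<^sup>/\<^sup>2 \<chi>(-2)\<^sup>-\<^sup>d \<chi>(det(1 - g))\<close>, and \<open>0\<close> where \<open>det(1 - g) = 0\<close>.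

  For orthogonal \<open>g\<close> we have \<open>det(1 - g) = (-1)\<^sup>d det g det(1 - g)\<close>, so the integrand vanishes
  on \<open>SO(V)\<close> when \<open>d\<close> is odd and off \<open>SO(V)\<close> when \<open>d\<close> is even. Substituting \<open>g = -h\<close>
  turns the zeta integral into \<open>\<chi>(-2)\<^sup>-\<^sup>d\<close> times the operator defining \<open>j(\<pi>\<^sub>0, \<chi>)\<close>, composed
  with \<open>\<pi>\<^sub>0(-1) = \<omega>\<^sub>\<pi>\<^sub>0(-1)\<close> when \<open>d\<close> is even; in the induced case this is done on each
  translate. Schur's lemma makes all operators involved scalars.
\<close>

lemma sum_matrix_vector_mult_adjoint:
  fixes M :: "'a::comm_ring_1^'n::finite^'m::finite"
  shows "(\<Sum>i\<in>UNIV. (M *v x)$i * z$i) = (\<Sum>k\<in>UNIV. x$k * (transpose M *v z)$k)"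
  unfolding matrix_vector_mult_def transpose_def
  by (simp add: sum_distrib_left sum_distrib_right del: transpose_matrix_vector)
    (subst sum.swap, simp add: ac_simps)

lemma matrix_vector_mult_axis_component:
  "((M::'a::comm_ring_1^'n::finite^'m) *v axis j 1) $ i = M$i$j"
  by (simp add: matrix_vector_mult_def axis_def if_distrib if_distribR cong: if_cong)

lemma matrix_vector_mult_mat: "(mat c :: 'a::comm_ring_1^'n::finite^'n) *v x = c *s x"
  by (simp add: vec_eq_iff matrix_vector_mult_def mat_def if_distrib if_distribR cong: if_cong)

lemma mat_minus_one_mult: "mat (-1) ** (A :: 'a::comm_ring_1^'n::finite^'m) = - A"
  by (simp add: matrix_matrix_mult_def mat_def vec_eq_iff if_distrib if_distribR sum_negf cong: if_cong)

lemma mat_mult_mat: "mat a ** mat b = (mat (a * b) :: 'a::field^'n::finite^'n)"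
  by (simp add: matrix_eq matrix_vector_mul_assoc[symmetric] matrix_vector_mult_mat)

lemma mat_mult_commute: "mat c ** A = A ** (mat c :: 'a::field^'n::finite^'n)"
  by (simp add: matrix_eq matrix_vector_mul_assoc[symmetric] matrix_vector_mult_mat
      vector_scalar_commute)

lemma mat_uminus: "mat (- c) = - (mat c :: 'a::ring_1^'n::finite^'n)"
  by (simp add: mat_def vec_eq_iff)

lemma matrix_mul_uminus_left: "(- A) ** (B :: 'a::comm_ring_1^'n::finite^'k::finite) = - (A ** B)"
  by (simp add: matrix_matrix_mult_def vec_eq_iff sum_negf)

lemma matrix_mul_uminus_right: "(A :: 'a::comm_ring_1^'k::finite^'m) ** (- B :: 'a^'n::finite^'k) = - (A ** B)"
  by (simp add: matrix_matrix_mult_def vec_eq_iff sum_negf)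

lemma det_mat: "det (mat c :: 'a::comm_ring_1^'n::finite^'n) = c ^ CARD('n)"
  by (subst det_diagonal) (auto simp: mat_def)

lemma det_uminus: "det (- A :: 'a::comm_ring_1^'n::finite^'n) = (-1) ^ CARD('n) * det A"
  by (metis det_mat det_mul mat_minus_one_mult)

lemma matrix_add_rdistrib: "((A :: 'a::comm_ring_1^'k::finite^'m) + B) ** (C :: 'a^'n::finite^'k) = A ** C + B ** C"
  by (simp add: matrix_matrix_mult_def vec_eq_iff algebra_simps sum.distrib)

lemma matrix_diff_ldistrib: "(A :: 'a::comm_ring_1^'k::finite^'m) ** ((B :: 'a^'n::finite^'k) - C) = A ** B - A ** C"
  by (simp add: matrix_matrix_mult_def vec_eq_iff algebra_simps sum_subtractf)

lemma matrix_diff_rdistrib: "((A :: 'a::comm_ring_1^'k::finite^'m) - B) ** (C :: 'a^'n::finite^'k) = A ** C - B ** C"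
  by (simp add: matrix_matrix_mult_def vec_eq_iff algebra_simps sum_subtractf)

lemma transpose_diff: "transpose (A - B) = transpose A - transpose B"
  by (simp add: transpose_def vec_eq_iff)

lemma transpose_uminus: "transpose (- A) = - transpose A"
  by (simp add: transpose_def vec_eq_iff)

lemma conj_one_minus:
  fixes k k' h :: "'a::comm_ring_1^'n::finite^'n"
  assumes "k ** k' = mat 1"
  shows "mat 1 - k ** h ** k' = k ** (mat 1 - h) ** k'"
  by (simp only: matrix_diff_ldistrib matrix_diff_rdistrib matrix_mul_rid assms)

lemma det_conj:
  fixes k k' h :: "'a::comm_ring_1^'n::finite^'n"
  assumes "k ** k' = mat 1"
  shows "det (k ** h ** k') = det h"
proof -
  have "det k * det k' = 1" by (metis assms det_I det_mul)
  moreover have "det (k ** h ** k') = det h * (det k * det k')" by (simp add: det_mul ac_simps)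
  ultimately show ?thesis by simp
qed

lemma conj_one_plus:
  fixes k k' h :: "'a::comm_ring_1^'n::finite^'n"
  assumes "k ** k' = mat 1"
  shows "mat 1 + k ** h ** k' = k ** (mat 1 + h) ** k'"
  by (simp only: matrix_add_ldistrib matrix_add_rdistrib matrix_mul_rid assms)

lemma matrix_inv_inverse:
  assumes "invertible (A :: 'a::semiring_1^'n^'m)"
  shows "A ** matrix_inv A = mat 1" "matrix_inv A ** A = mat 1"
  using someI_ex[OF assms[unfolded invertible_def]] by (simp_all add: matrix_inv_def)

lemma of_nat_CARD_eq_0: "of_nat CARD('a::{finite,ring_1}) = (0::'a)"
proof -
  have "(\<Sum>x\<in>UNIV. x) = (\<Sum>x\<in>UNIV. x + (1::'a))"
    by (rule sum.reindex_bij_witness[of _ "\<lambda>x. x + 1" "\<lambda>x. x - 1"]) auto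
  then show ?thesis by (simp add: sum.distrib)
qed

lemma two_neq_zero_if_odd_card:
  assumes "odd CARD('a::{finite,field})"
  shows "(2::'a) \<noteq> 0"
proof
  assume "(2::'a) = 0"
  obtain k where "CARD('a) = 2 * k + 1" using assms oddE by blast
  then have "of_nat CARD('a) = 2 * of_nat k + (1::'a)" by simp
  then show False using \<open>(2::'a) = 0\<close> by (simp add: of_nat_CARD_eq_0)
qed

definition multiplicative_char :: "('f::field \<Rightarrow> 'c::field) \<Rightarrow> bool" where
  "multiplicative_char chi \<longleftrightarrow>
     (\<forall>a b. a \<noteq> 0 \<longrightarrow> b \<noteq> 0 \<longrightarrow> chi (a * b) = chi a * chi b) \<and> (\<forall>a. a \<noteq> 0 \<longrightarrow> chi a \<noteq> 0)"

context
  fixes chi :: "'f::field \<Rightarrow> 'c::field"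
  assumes chi: "multiplicative_char chi"
begin

lemma mult_char_mult: "a \<noteq> 0 \<Longrightarrow> b \<noteq> 0 \<Longrightarrow> chi (a * b) = chi a * chi b"
  using chi by (simp add: multiplicative_char_def)

lemma mult_char_1: "chi 1 = 1"
proof -
  have "chi 1 * chi 1 = chi 1 * 1" using mult_char_mult[of 1 1] by simp
  then show ?thesis using chi by (simp add: multiplicative_char_def)
qed

lemma mult_char_power: "a \<noteq> 0 \<Longrightarrow> chi (a ^ k) = chi a ^ k"
  by (induction k) (simp_all add: mult_char_1 mult_char_mult)

lemma mult_char_inverse: "a \<noteq> 0 \<Longrightarrow> chi (inverse a) = inverse (chi a)"
  using mult_char_mult[of a "inverse a"] mult_char_1 by (simp add: inverse_unique)

lemma mult_char_det_scale:
  assumes "c \<noteq> 0" "det A \<noteq> 0"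
  shows "chi (det (mat c ** A)) = chi c ^ CARD('n) * chi (det (A :: 'f^'n::finite^'n))"
  using assms by (simp add: det_mul det_mat mult_char_mult mult_char_power)

end

definition bilin :: "'a::comm_ring_1^'n::finite^'n \<Rightarrow> 'a^'n \<Rightarrow> 'a^'n \<Rightarrow> 'a" where
  "bilin A x y = (\<Sum>i\<in>UNIV. x$i * (A *v y)$i)"

lemma bilin_matrix_vector_mult:
  "bilin A (M *v x) (N *v y) = bilin (transpose M ** A ** N) x y"
  by (simp only: bilin_def sum_matrix_vector_mult_adjoint matrix_vector_mul_assoc matrix_mul_assoc)

lemma bilin_axis: "bilin A (axis i 1) (axis j 1) = A$i$j"
  unfolding bilin_def matrix_vector_mult_axis_component
  by (simp add: axis_def if_distrib if_distribR cong: if_cong)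

lemma orth_group_iff: "g \<in> orth_group A \<longleftrightarrow> (\<forall>x y. bilin A (g *v x) (g *v y) = bilin A x y)"
proof
  assume "g \<in> orth_group A"
  then show "\<forall>x y. bilin A (g *v x) (g *v y) = bilin A x y"
    by (simp add: orth_group_def bilin_matrix_vector_mult)
next
  assume "\<forall>x y. bilin A (g *v x) (g *v y) = bilin A x y"
  then have "(transpose g ** A ** g) $ i $ j = A $ i $ j" for i j
    by (metis bilin_axis bilin_matrix_vector_mult)
  then show "g \<in> orth_group A" by (simp add: orth_group_def vec_eq_iff)
qed

lemma bilin_add_left: "bilin A (x + y) z = bilin A x z + bilin A y z"
  by (simp add: bilin_def algebra_simps sum.distrib)
lemma bilin_add_right: "bilin A x (y + z) = bilin A x y + bilin A x z"
  by (simp add: bilin_def matrix_vector_mult_def algebra_simps sum.distrib)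
lemma bilin_diff_left: "bilin A (x - y) z = bilin A x z - bilin A y z"
  by (simp add: bilin_def algebra_simps sum_subtractf)
lemma bilin_diff_right: "bilin A x (y - z) = bilin A x y - bilin A x z"
  by (simp add: bilin_def matrix_vector_mult_def algebra_simps sum_subtractf)
lemma bilin_minus_left: "bilin A (- x) z = - bilin A x z"
  by (simp add: bilin_def sum_negf)
lemma bilin_minus_right: "bilin A x (- z) = - bilin A x z"
  by (simp add: bilin_def matrix_vector_mult_def sum_negf)
lemma bilin_scale_left: "bilin A (c *s x) z = c * bilin A x z"
  by (simp add: bilin_def sum_distrib_left mult.assoc)
lemma bilin_scale_right: "bilin A x (c *s z) = c * bilin A x z"
  by (simp add: bilin_def matrix_vector_mult_def sum_distrib_left ac_simps)

lemmas bilin_linear = bilin_add_left bilin_add_right bilin_diff_left bilin_diff_right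
  bilin_minus_left bilin_minus_right bilin_scale_left bilin_scale_right

lemma orth_group_mult: "a \<in> orth_group A \<Longrightarrow> b \<in> orth_group A \<Longrightarrow> a ** b \<in> orth_group A"
  by (simp add: orth_group_iff matrix_vector_mul_assoc[symmetric])

lemma mat_1_in_orth_group: "mat 1 \<in> orth_group A"
  by (simp add: orth_group_iff)

lemma orth_group_uminus: "- g \<in> orth_group A \<longleftrightarrow> g \<in> orth_group A"
  by (simp add: orth_group_def transpose_uminus matrix_mul_uminus_left matrix_mul_uminus_right)

lemma det_orth_group:
  assumes "g \<in> orth_group B" "det B \<noteq> 0"
  shows "det g = 1 \<or> det g = -1"
proof -
  have "det g * det g * det B = 1 * det B"
    using assms(1) det_mul[of "transpose g ** B" g] det_mul[of "transpose g" B]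
    by (simp add: orth_group_def)
  then have "det g ^ 2 = 1" using assms(2) by (simp add: power2_eq_square)
  then show ?thesis by (simp add: power2_eq_1_iff)
qed

lemma orth_group_inverse:
  assumes "g \<in> orth_group B" "det B \<noteq> 0"
  obtains h where "h \<in> orth_group B" "g ** h = mat 1" "h ** g = mat 1"
proof -
  have "invertible g" using det_orth_group[OF assms] by (auto simp: invertible_det_nz)
  then obtain h where h: "g ** h = mat 1" "h ** g = mat 1" unfolding invertible_def by blast
  have "bilin B (h *v x) (h *v y) = bilin B x y" for x y
    using assms(1) unfolding orth_group_iff
    by (metis h(1) matrix_vector_mul_assoc matrix_vector_mul_lid)
  then show ?thesis using that h unfolding orth_group_iff by blast
qed

text \<open>Take determinants in \<open>(1 - g)\<^sup>T B = g\<^sup>T B (g - 1)\<close>, which holds as \<open>g\<^sup>T B g = B\<close>.\<close>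
lemma det_one_minus_orth:
  assumes "g \<in> orth_group B" "det B \<noteq> 0"
  shows "det (mat 1 - g) = (-1) ^ CARD('n) * det g * det (mat 1 - (g::'a::field^'n::finite^'n))"
proof -
  have "transpose (mat 1 - g) ** B = transpose g ** B ** (g - mat 1)"
    using assms(1)
    by (simp add: orth_group_def transpose_diff matrix_diff_ldistrib matrix_diff_rdistrib)
  then have "det (mat 1 - g) * det B = det g * det B * det (g - mat 1)"
    by (metis det_mul det_transpose)
  moreover have "det (g - mat 1) = (-1) ^ CARD('n) * det (mat 1 - g)"
    by (metis det_uminus minus_diff_eq)
  ultimately have "det (mat 1 - g) * det B = ((-1) ^ CARD('n) * det g * det (mat 1 - g)) * det B"
    by (simp only: ac_simps)
  then show ?thesis using assms(2) by simp
qed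

section \<open>The doubled space\<close>

definition vpair :: "'a^'n::finite \<Rightarrow> 'a^'n \<Rightarrow> 'a^('n+'n)" where
  "vpair a b = (\<chi> k. case k of Inl i \<Rightarrow> a$i | Inr i \<Rightarrow> b$i)"

definition vfst :: "'a^('n::finite+'n) \<Rightarrow> 'a^'n" where
  "vfst x = (\<chi> i. x$Inl i)"

definition vsnd :: "'a^('n::finite+'n) \<Rightarrow> 'a^'n" where
  "vsnd x = (\<chi> i. x$Inr i)"

lemma vfst_vpair [simp]: "vfst (vpair a b) = a"
  by (simp add: vfst_def vpair_def)

lemma vsnd_vpair [simp]: "vsnd (vpair a b) = b"
  by (simp add: vsnd_def vpair_def)

lemma vpair_vfst_vsnd [simp]: "vpair (vfst x) (vsnd x) = x"
  by (simp add: vec_eq_iff vpair_def vfst_def vsnd_def split: sum.split)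

lemma vpair_eq_iff [simp]: "vpair a b = vpair c d \<longleftrightarrow> a = c \<and> b = d"
  by (metis vfst_vpair vsnd_vpair)

lemma vpair_add: "vpair a b + vpair c d = vpair (a + c) (b + d)"
  by (simp add: vec_eq_iff vpair_def split: sum.split)

lemma vpair_scale: "c *s vpair a b = vpair (c *s a) (c *s b)"
  by (simp add: vec_eq_iff vpair_def split: sum.split)

lemma vpair_zero [simp]: "vpair 0 0 = 0"
  by (simp add: vec_eq_iff vpair_def split: sum.split)

lemma vfst_add [simp]: "vfst (x + y) = vfst x + vfst y"
  and vsnd_add [simp]: "vsnd (x + y) = vsnd x + vsnd y"
  and vfst_diff [simp]: "vfst (x - y) = vfst x - vfst y"
  and vsnd_diff [simp]: "vsnd (x - y) = vsnd x - vsnd y"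
  and vfst_scale [simp]: "vfst (c *s x) = c *s vfst x"
  and vsnd_scale [simp]: "vsnd (c *s x) = c *s vsnd x"
  by (simp_all add: vfst_def vsnd_def vec_eq_iff)

lemma diag_emb_eq_vpair: "diag_emb v = vpair v v"
  by (simp add: vec_eq_iff vpair_def diag_emb_def split: sum.split)

lemma in_V_Delta_iff: "x \<in> V_Delta \<longleftrightarrow> vfst x = vsnd x"
proof
  assume "x \<in> V_Delta"
  then show "vfst x = vsnd x" by (auto simp: V_Delta_def diag_emb_eq_vpair)
next
  assume "vfst x = vsnd x"
  then have "x = diag_emb (vfst x)" by (metis diag_emb_eq_vpair vpair_vfst_vsnd)
  then show "x \<in> V_Delta" by (simp add: V_Delta_def)
qed

lemma sum_UNIV_Plus:
  fixes f :: "'a::finite + 'b::finite \<Rightarrow> 'c::comm_monoid_add"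
  shows "(\<Sum>k\<in>UNIV. f k) = (\<Sum>i\<in>UNIV. f (Inl i)) + (\<Sum>i\<in>UNIV. f (Inr i))"
proof -
  have "sum f UNIV = sum f (UNIV <+> UNIV)" by simp
  also have "\<dots> = sum (f \<circ> Inl) UNIV + sum (f \<circ> Inr) UNIV" by (rule sum.Plus) simp_all
  finally show ?thesis by (simp add: o_def)
qed

lemma iota_mult_vector: "iota g1 g2 *v x = vpair (g1 *v vfst x) (g2 *v vsnd x)"
  by (simp add: vec_eq_iff iota_def vpair_def vfst_def vsnd_def matrix_vector_mult_def
      sum_UNIV_Plus split: sum.split)

lemma w_V_mult_vector: "(w_V :: 'a::field^('n::finite+'n)^('n+'n)) *v x = vpair (vfst x) (- vsnd x)"
  by (simp add: w_V_def iota_mult_vector matrix_vector_mult_mat vector_sneg_minus1[symmetric])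

lemma dbl_form_mult_vector: "dbl_form B *v y = vpair (B *v vfst y) (- (B *v vsnd y))"
  by (simp add: vec_eq_iff dbl_form_def vpair_def vfst_def vsnd_def matrix_vector_mult_def
      sum_UNIV_Plus sum_negf split: sum.split)

lemma bilin_dbl_form:
  "bilin (dbl_form B) x y = bilin B (vfst x) (vfst y) - bilin B (vsnd x) (vsnd y)"
  by (simp add: bilin_def dbl_form_mult_vector sum_UNIV_Plus sum_negf vpair_def vfst_def vsnd_def)

lemma iota_in_orth_group:
  "g \<in> orth_group B \<Longrightarrow> h \<in> orth_group B \<Longrightarrow> iota g h \<in> orth_group (dbl_form B)"
  by (simp add: orth_group_iff iota_mult_vector bilin_dbl_form)

lemma w_V_in_orth_group: "(w_V :: 'a::field^('n::finite+'n)^('n+'n)) \<in> orth_group (dbl_form B)"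
  by (simp add: orth_group_iff w_V_mult_vector bilin_dbl_form bilin_minus_left bilin_minus_right)

lemma P_V_iff:
  "p \<in> P_V B \<longleftrightarrow>
     p \<in> orth_group (dbl_form B) \<and> (\<forall>v. vfst (p *v diag_emb v) = vsnd (p *v diag_emb v))"
  by (simp add: P_V_def in_V_Delta_iff)

lemma N_V_in_orth_group: "u \<in> N_V B \<Longrightarrow> u \<in> orth_group (dbl_form B)"
  by (simp add: N_V_def P_V_def)

lemma N_V_fixes_diag: "u \<in> N_V B \<Longrightarrow> u *v diag_emb v = diag_emb v"
  by (simp add: N_V_def)

lemma N_V_shift:
  assumes "u \<in> N_V B"
  shows "vfst (u *v y) - vfst y = vsnd (u *v y) - vsnd y"
proof -
  have "u *v y - y \<in> V_Delta" using assms by (simp add: N_V_def)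
  then show ?thesis by (simp add: in_V_Delta_iff)
qed

lemma restr_Delta_eq:
  assumes "\<And>v. p *v diag_emb v = diag_emb (M *v v)"
  shows "restr_Delta p = M"
  using assms matrix_vector_mult_axis_component[of M]
  by (simp add: restr_Delta_def vec_eq_iff diag_emb_def)

section \<open>The integrand of the zeta integral\<close>

text \<open>Since \<open>f0_V B chi\<close> is supported on \<open>P_V B\<close>, the admissible \<open>u\<close> index the only nonzero
  terms of the sum defining \<open>M_V B sq (f0_V B chi) (iota g (mat 1))\<close>.\<close>
definition admissible :: "'f::field^'n::finite^'n \<Rightarrow> 'f^'n^'n \<Rightarrow> 'f^('n+'n)^('n+'n) \<Rightarrow> bool" where
  "admissible B g u \<longleftrightarrow> u \<in> N_V B \<and> w_V ** u ** iota g (mat 1) \<in> P_V B"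

lemma det_diff_mat_1_eq_0_iff: "det (g - mat 1) = 0 \<longleftrightarrow> det (mat 1 - (g :: 'a::idom^'n::finite^'n)) = 0"
  using det_uminus[of "mat 1 - g"] by simp

context
  fixes B :: "'f::field^'n::finite^'n" and g :: "'f^'n^'n"
  assumes two: "(2::'f) \<noteq> 0" and g_orth: "g \<in> orth_group B"
begin

lemma admissible_action:
  assumes "admissible B g u"
  shows "u *v vpair (g *v v) v = vpair (inverse 2 *s (g *v v - v)) (- (inverse 2 *s (g *v v - v)))"
proof -
  have u: "u \<in> N_V B" and P: "w_V ** u ** iota g (mat 1) \<in> P_V B"
    using assms by (simp_all add: admissible_def)
  define z where "z = u *v vpair (g *v v) v"
  have "(w_V ** u ** iota g (mat 1)) *v diag_emb v = vpair (vfst z) (- vsnd z)"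
    by (simp add: z_def diag_emb_eq_vpair iota_mult_vector w_V_mult_vector
        matrix_vector_mul_assoc[symmetric])
  then have e1: "vfst z = - vsnd z" using P by (metis P_V_iff vfst_vpair vsnd_vpair)
  have e2: "vfst z - g *v v = vsnd z - v"
    using N_V_shift[OF u, of "vpair (g *v v) v"] by (simp add: z_def)
  have h: "vfst z = inverse 2 *s (g *v v - v)"
  proof (rule iffD2[OF vec_eq_iff], rule allI)
    fix i
    from e1 e2 have "vfst z $ i = - vsnd z $ i" "vfst z $ i - (g *v v) $ i = vsnd z $ i - v $ i"
      by (simp_all add: vec_eq_iff)
    with two show "vfst z $ i = (inverse 2 *s (g *v v - v)) $ i" by (simp add: field_simps)
  qed
  have vs: "vsnd z = - vfst z" using e1 by simp
  have "z = vpair (vfst z) (vsnd z)" by simp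
  also have "\<dots> = vpair (inverse 2 *s (g *v v - v)) (- (inverse 2 *s (g *v v - v)))"
    by (simp only: vs h)
  finally show ?thesis by (simp only: z_def)
qed

lemma admissible_diag_action:
  assumes "admissible B g u"
  shows "(w_V ** u ** iota g (mat 1)) *v diag_emb v = diag_emb (inverse 2 *s (g *v v - v))"
  by (simp add: diag_emb_eq_vpair iota_mult_vector w_V_mult_vector admissible_action[OF assms]
      matrix_vector_mul_assoc[symmetric])

text \<open>Evaluating \<open>admissible_action\<close> at \<open>g v = v\<close> gives \<open>u (v, v) = 0\<close>, while \<open>u\<close> fixes \<open>V\<^sup>\<Delta>\<close>.\<close>
lemma admissible_fixed_vector:
  assumes "admissible B g u" "g *v v = v"
  shows "v = 0"
proof -
  have "diag_emb v = u *v diag_emb v"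
    using assms(1) N_V_fixes_diag[of u B v] by (simp add: admissible_def)
  also have "\<dots> = 0"
    using admissible_action[OF assms(1), of v] assms(2) by (simp add: diag_emb_eq_vpair)
  finally show ?thesis by (simp add: diag_emb_eq_vpair flip: vpair_zero)
qed

lemma admissible_unique:
  assumes inv: "invertible (g - mat 1)" and u: "admissible B g u" and u': "admissible B g u'"
  shows "u = u'"
  unfolding matrix_eq
proof
  fix y :: "'f^('n+'n)"
  define v where "v = matrix_inv (g - mat 1) *v (vfst y - vsnd y)"
  define c where "c = vsnd y - v"
  have "(g - mat 1) *v v = vfst y - vsnd y"
    unfolding v_def by (simp only: matrix_vector_mul_assoc matrix_inv_inverse(1)[OF inv] matrix_vector_mul_lid)
  then have "g *v v - v = vfst y - vsnd y" by (simp add: matrix_vector_mult_diff_rdistrib)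
  then have y: "y = vpair (g *v v) v + diag_emb c"
    by (simp add: c_def diag_emb_eq_vpair vpair_add algebra_simps)
  have "w *v y = vpair (inverse 2 *s (g *v v - v)) (- (inverse 2 *s (g *v v - v))) + diag_emb c"
    if w: "admissible B g w" for w
  proof -
    have "w \<in> N_V B" using w by (simp add: admissible_def)
    then show ?thesis
      by (subst y) (simp add: matrix_vector_right_distrib admissible_action[OF w] N_V_fixes_diag)
  qed
  then show "u *v y = u' *v y" using u u' by simp
qed

lemma restr_Delta_admissible:
  assumes "admissible B g u"
  shows "restr_Delta (w_V ** u ** iota g (mat 1)) = mat (inverse (- 2)) ** (mat 1 - g)"
proof (rule restr_Delta_eq)
  fix v
  have "(w_V ** u ** iota g (mat 1)) *v diag_emb v = diag_emb (inverse 2 *s (g *v v - v))"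
    by (rule admissible_diag_action[OF assms])
  also have "inverse 2 *s (g *v v - v) = (mat (inverse (- 2)) ** (mat 1 - g)) *v v"
    by (simp add: vec_eq_iff algebra_simps matrix_vector_mul_assoc[symmetric] matrix_vector_mult_mat
        matrix_vector_mult_diff_rdistrib)
  finally show "(w_V ** u ** iota g (mat 1)) *v diag_emb v = diag_emb ((mat (inverse (- 2)) ** (mat 1 - g)) *v v)" .
qed

end

text \<open>If \<open>g - 1\<close> is invertible, the admissible \<open>u\<close> is \<open>x \<mapsto> x + diag_emb (S (x\<^sub>1 - x\<^sub>2))\<close> for the
  Cayley transform \<open>S = -(g + 1)(g - 1)\<^sup>-\<^sup>1 / 2\<close> of \<open>g\<close>, which is skew for \<open>B\<close>.\<close>
definition cayley_skew :: "'a::field^'n::finite^'n \<Rightarrow> 'a^'n^'n" where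
  "cayley_skew g = mat (- inverse 2) ** (g + mat 1) ** matrix_inv (g - mat 1)"

lemma cayley_skew_mult:
  assumes "invertible (g - mat 1)"
  shows "cayley_skew g *v ((g - mat 1) *v a) = - inverse 2 *s (g *v a + a)"
proof -
  have "cayley_skew g ** (g - mat 1) = mat (- inverse 2) ** (g + mat 1)"
    by (simp only: cayley_skew_def matrix_mul_assoc[symmetric] matrix_inv_inverse(2)[OF assms]
        matrix_mul_rid)
  then have "cayley_skew g *v ((g - mat 1) *v a) = mat (- inverse 2) *v ((g + mat 1) *v a)"
    by (simp only: matrix_vector_mul_assoc)
  then show ?thesis by (simp add: matrix_vector_mult_mat matrix_vector_mult_add_rdistrib)
qed

lemma cayley_skew_skew:
  assumes inv: "invertible (g - mat 1)" and g: "g \<in> orth_group B"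
  shows "bilin B (cayley_skew g *v a) b + bilin B a (cayley_skew g *v b) = 0"
proof -
  define a' where "a' = matrix_inv (g - mat 1) *v a"
  define b' where "b' = matrix_inv (g - mat 1) *v b"
  have ga: "(g - mat 1) *v a' = a" and gb: "(g - mat 1) *v b' = b"
    unfolding a'_def b'_def
    by (simp_all only: matrix_vector_mul_assoc matrix_inv_inverse(1)[OF inv] matrix_vector_mul_lid)
  have Sa: "cayley_skew g *v a = - inverse 2 *s (g *v a' + a')"
    using cayley_skew_mult[OF inv, of a'] by (simp only: ga)
  have Sb: "cayley_skew g *v b = - inverse 2 *s (g *v b' + b')"
    using cayley_skew_mult[OF inv, of b'] by (simp only: gb)
  have a: "a = g *v a' - a'" and b: "b = g *v b' - b'"
    using ga gb by (simp_all add: matrix_vector_mult_diff_rdistrib)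
  have "bilin B (g *v a') (g *v b') = bilin B a' b'" using g by (simp add: orth_group_iff)
  then show ?thesis
    by (simp only: Sa Sb) (simp add: a b bilin_linear algebra_simps)
qed

definition cayley_u :: "'a::field^'n::finite^'n \<Rightarrow> 'a^('n+'n)^('n+'n)" where
  "cayley_u S = matrix (\<lambda>y. y + diag_emb (S *v (vfst y - vsnd y)))"

lemma cayley_u_mult_vector:
  fixes S :: "'a::field^'n::finite^'n"
  shows "cayley_u S *v y = y + diag_emb (S *v (vfst y - vsnd y))"
proof -
  have "Vector_Spaces.linear (*s) (*s) (\<lambda>y::'a^('n+'n). y + diag_emb (S *v (vfst y - vsnd y)))"
    by (auto simp: Vector_Spaces.linear_iff vec.vector_space_axioms diag_emb_eq_vpair vpair_add
        vpair_scale matrix_vector_right_distrib matrix_vector_mult_diff_distrib vector_scalar_commute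
        vector_add_ldistrib vector_ssub_ldistrib)
  then show ?thesis unfolding cayley_u_def by (rule matrix_works)
qed

lemma cayley_u_in_N_V:
  assumes skew: "\<forall>a b. bilin B (S *v a) b + bilin B a (S *v b) = 0"
  shows "cayley_u S \<in> N_V B"
proof -
  have "bilin (dbl_form B) (cayley_u S *v x) (cayley_u S *v y) = bilin (dbl_form B) x y" for x y
    using skew[rule_format, of "vfst x - vsnd x" "vfst y - vsnd y"]
    by (simp add: cayley_u_mult_vector bilin_dbl_form diag_emb_eq_vpair bilin_linear algebra_simps)
  moreover have "cayley_u S *v diag_emb v = diag_emb v" for v
    by (simp add: cayley_u_mult_vector diag_emb_eq_vpair)
  moreover have "cayley_u S *v x - x \<in> V_Delta" for x
    by (simp add: cayley_u_mult_vector V_Delta_def)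
  ultimately show ?thesis
    by (simp add: N_V_def P_V_def orth_group_iff V_Delta_def)
qed

lemma cayley_u_admissible:
  fixes g :: "'f::field^'n::finite^'n"
  assumes two: "(2::'f) \<noteq> 0" and inv: "invertible (g - mat 1)" and g: "g \<in> orth_group B"
  shows "admissible B g (cayley_u (cayley_skew g))"
proof -
  let ?u = "cayley_u (cayley_skew g)"
  have N: "?u \<in> N_V B" using cayley_skew_skew[OF inv g] by (blast intro: cayley_u_in_N_V)
  have "vfst (p *v diag_emb v) = vsnd (p *v diag_emb v)" if "p = w_V ** ?u ** iota g (mat 1)" for p v
  proof -
    have S: "cayley_skew g *v (g *v v - v) = - inverse 2 *s (g *v v + v)"
      using cayley_skew_mult[OF inv, of v] by (simp add: matrix_vector_mult_diff_rdistrib)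
    have "?u *v (iota g (mat 1) *v diag_emb v)
        = vpair (g *v v + cayley_skew g *v (g *v v - v)) (v + cayley_skew g *v (g *v v - v))"
      by (simp add: iota_mult_vector diag_emb_eq_vpair cayley_u_mult_vector vpair_add)
    then have "p *v diag_emb v
        = vpair (g *v v + cayley_skew g *v (g *v v - v)) (- (v + cayley_skew g *v (g *v v - v)))"
      by (simp only: that matrix_vector_mul_assoc[symmetric] w_V_mult_vector vfst_vpair vsnd_vpair)
    moreover have "g *v v + cayley_skew g *v (g *v v - v) = - (v + cayley_skew g *v (g *v v - v))"
      using two by (simp add: S vec_eq_iff field_simps)
    ultimately show ?thesis by simp
  qed
  moreover have "w_V ** ?u ** iota g (mat 1) \<in> orth_group (dbl_form B)"
    by (intro orth_group_mult w_V_in_orth_group N_V_in_orth_group[OF N] iota_in_orth_group g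
        mat_1_in_orth_group)
  ultimately show ?thesis using N by (simp add: admissible_def P_V_iff)
qed

lemma sum_N_V_f0_V:
  fixes B :: "'f::{finite,field}^'n::finite^'n"
  assumes two: "(2::'f) \<noteq> 0" and g: "g \<in> orth_group B"
  shows "(\<Sum>u\<in>N_V B. f0_V B chi (w_V ** u ** iota g (mat 1))) =
    (if det (mat 1 - g) = 0 then 0 else chi (det (mat (inverse (- 2)) ** (mat 1 - g))))"
proof (cases "det (mat 1 - g) = 0")
  case True
  then obtain v where "(mat 1 - g) *v v = 0" "v \<noteq> 0"
    by (metis invertible_det_nz invertible_left_inverse matrix_left_invertible_ker)
  then have "\<not> admissible B g u" for u
    using admissible_fixed_vector[OF two g] by (auto simp: matrix_vector_mult_diff_rdistrib)
  then show ?thesis using True by (simp add: f0_V_def admissible_def)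
next
  case False
  let ?u = "cayley_u (cayley_skew g)"
  have inv: "invertible (g - mat 1)"
    using False by (simp add: invertible_det_nz det_diff_mat_1_eq_0_iff)
  have adm: "admissible B g ?u" by (rule cayley_u_admissible[OF two inv g])
  have "(\<Sum>u\<in>N_V B. f0_V B chi (w_V ** u ** iota g (mat 1)))
      = f0_V B chi (w_V ** ?u ** iota g (mat 1)) + (\<Sum>u\<in>N_V B - {?u}. f0_V B chi (w_V ** u ** iota g (mat 1)))"
    using adm by (intro sum.remove) (simp_all add: admissible_def)
  also have "(\<Sum>u\<in>N_V B - {?u}. f0_V B chi (w_V ** u ** iota g (mat 1))) = 0"
    using admissible_unique[OF two g inv adm] by (intro sum.neutral) (auto simp: f0_V_def admissible_def)
  also have "f0_V B chi (w_V ** ?u ** iota g (mat 1)) + 0 = chi (det (mat (inverse (- 2)) ** (mat 1 - g)))"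
    using adm by (simp add: f0_V_def det_Delta_def restr_Delta_admissible[OF two g] admissible_def)
  finally show ?thesis using False by simp
qed

lemma M_V_f0_V_iota:
  fixes B :: "'f::{finite,field}^'n::finite^'n" and chi :: "'f \<Rightarrow> 'c::field"
  assumes two: "(2::'f) \<noteq> 0" and chi: "multiplicative_char chi" and g: "g \<in> orth_group B"
  shows "M_V B sq (f0_V B chi) (iota g (mat 1)) = inverse (lie_sqrt_card B sq) *
    (if det (mat 1 - g) = 0 then 0 else inverse (chi (- 2)) ^ CARD('n) * chi (det (mat 1 - g)))"
  using two mult_char_inverse[OF chi, of "- 2"]
  by (simp add: M_V_def matrix_mul_assoc sum_N_V_f0_V[OF two g] mult_char_det_scale[OF chi])

section \<open>Schur's lemma\<close>

definition fun_scale :: "'c::field \<Rightarrow> ('x \<Rightarrow> 'c) \<Rightarrow> 'x \<Rightarrow> 'c" where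
  "fun_scale c f = (\<lambda>x. c * f x)"

interpretation fun_vs: vector_space "fun_scale :: 'c::field \<Rightarrow> ('x \<Rightarrow> 'c) \<Rightarrow> 'x \<Rightarrow> 'c"
  by unfold_locales (auto simp: fun_scale_def fun_eq_iff algebra_simps)

lemma sum_fun_apply: "(\<Sum>i\<in>A. f i) x = (\<Sum>i\<in>A. f i x)"
  by (induction A rule: infinite_finite_induct) auto

lemma csubspace_iff_subspace: "csubspace W \<longleftrightarrow> fun_vs.subspace W"
  by (simp add: csubspace_def fun_vs.subspace_def fun_scale_def zero_fun_def plus_fun_def)

lemma csubspace_sum:
  assumes "csubspace W" "finite A" "\<forall>i\<in>A. g i \<in> W"
  shows "(\<lambda>x. \<Sum>i\<in>A. c i * g i x) \<in> W"
  using assms(2,3)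
  by (induction A rule: finite_induct) (use assms(1) in \<open>simp_all add: csubspace_def\<close>)

definition linear_endo :: "('x \<Rightarrow> 'c::field) set \<Rightarrow> (('x \<Rightarrow> 'c) \<Rightarrow> 'x \<Rightarrow> 'c) \<Rightarrow> bool" where
  "linear_endo W L \<longleftrightarrow> (\<forall>f\<in>W. L f \<in> W)
     \<and> (\<forall>f\<in>W. \<forall>h\<in>W. L (\<lambda>x. f x + h x) = (\<lambda>x. L f x + L h x))
     \<and> (\<forall>c. \<forall>f\<in>W. L (\<lambda>x. c * f x) = (\<lambda>x. c * L f x))"

lemma linear_endo_in: "linear_endo W L \<Longrightarrow> f \<in> W \<Longrightarrow> L f \<in> W"
  and linear_endo_add: "linear_endo W L \<Longrightarrow> f \<in> W \<Longrightarrow> h \<in> W \<Longrightarrow> L (\<lambda>x. f x + h x) = (\<lambda>x. L f x + L h x)"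
  and linear_endo_scale: "linear_endo W L \<Longrightarrow> f \<in> W \<Longrightarrow> L (\<lambda>x. c * f x) = (\<lambda>x. c * L f x)"
  by (simp_all add: linear_endo_def)

lemma linear_endo_zero:
  assumes "linear_endo W L" "csubspace W"
  shows "L (\<lambda>_. 0) = (\<lambda>_. 0)"
  using linear_endo_scale[OF assms(1), of "\<lambda>_. 0" 0] assms(2) by (simp add: csubspace_def)

lemma linear_endo_sum:
  assumes L: "linear_endo W L" and W: "csubspace W" and "finite A" "\<forall>i\<in>A. g i \<in> W"
  shows "L (\<lambda>x. \<Sum>i\<in>A. c i * g i x) = (\<lambda>x. \<Sum>i\<in>A. c i * L (g i) x)"
  using assms(3,4)
proof (induction A rule: finite_induct)
  case empty then show ?case using linear_endo_zero[OF L W] by simp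
next
  case (insert a A)
  have "(\<lambda>x. c a * g a x) \<in> W" "(\<lambda>x. \<Sum>i\<in>A. c i * g i x) \<in> W"
    using insert W csubspace_sum by (auto simp: csubspace_def)
  then show ?case
    using insert linear_endo_add[OF L] linear_endo_scale[OF L] by simp
qed

lemma linear_endo_funpow: "linear_endo W L \<Longrightarrow> linear_endo W (L ^^ n)"
  by (induction n) (auto simp: linear_endo_def)

lemma is_rep_linear_endo: "is_rep G W \<rho> \<Longrightarrow> g \<in> G \<Longrightarrow> linear_endo W (\<rho> g)"
  unfolding is_rep_def linear_endo_def by blast

lemma irred_rep_nonzero:
  assumes "irred_rep G W \<rho>"
  shows "\<exists>f\<in>W. f \<noteq> (\<lambda>_. 0)"
proof -
  have "W \<noteq> {\<lambda>_. 0}" "(\<lambda>_. 0) \<in> W"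
    using assms by (simp_all add: irred_rep_def is_rep_def csubspace_def)
  then show ?thesis by blast
qed

lemma scalar_of_eq:
  assumes "\<exists>f\<in>W. f \<noteq> (\<lambda>_. 0)" and "\<forall>f\<in>W. T f = (\<lambda>x. c * f x)"
  shows "scalar_of W T = c"
  unfolding scalar_of_def
proof (rule the_equality)
  fix c' assume c': "\<forall>f\<in>W. T f = (\<lambda>x. c' * f x)"
  obtain f x where "f \<in> W" "f x \<noteq> 0" using assms(1) by (auto simp: fun_eq_iff)
  then show "c' = c" using c' assms(2) by (metis mult_cancel_right)
qed (rule assms(2))

locale schur =
  fixes G :: "('f::field^'n::finite^'n) set" and W :: "('x \<Rightarrow> 'c::field) set"
    and \<rho> :: "'f^'n^'n \<Rightarrow> ('x \<Rightarrow> 'c) \<Rightarrow> 'x \<Rightarrow> 'c" and T :: "('x \<Rightarrow> 'c) \<Rightarrow> 'x \<Rightarrow> 'c"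
  assumes irred: "irred_rep G W \<rho>" and finite_G: "finite G"
    and closed: "\<forall>g\<in>G. \<forall>h\<in>G. g ** h \<in> G"
    and T_linear: "linear_endo W T" and T_equivariant: "\<forall>g\<in>G. \<forall>f\<in>W. T (\<rho> g f) = \<rho> g (T f)"
    and alg_closed: "\<forall>p :: 'c poly. 0 < degree p \<longrightarrow> (\<exists>z. poly p z = 0)"
begin

lemma rep: "is_rep G W \<rho>"
  using irred by (simp add: irred_rep_def)

lemma subspace_W: "csubspace W"
  using rep by (simp add: is_rep_def)

lemma invariant_subspace_eq:
  assumes "csubspace U" "U \<subseteq> W" "\<forall>g\<in>G. \<forall>f\<in>U. \<rho> g f \<in> U" "f \<in> U" "f \<noteq> (\<lambda>_. 0)"
  shows "U = W"
  using irred assms unfolding irred_rep_def by blast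

text \<open>An eigenspace of \<open>T\<close> is \<open>G\<close>-invariant.\<close>
lemma eigenvector_scalar:
  assumes f0: "f0 \<in> W" "f0 \<noteq> (\<lambda>_. 0)" and eigen: "T f0 = (\<lambda>x. c * f0 x)"
  shows "\<forall>f\<in>W. T f = (\<lambda>x. c * f x)"
proof -
  let ?E = "{f\<in>W. T f = (\<lambda>x. c * f x)}"
  have "csubspace ?E"
    using subspace_W linear_endo_zero[OF T_linear subspace_W] linear_endo_add[OF T_linear]
      linear_endo_scale[OF T_linear]
    by (auto simp: csubspace_def distrib_left mult.left_commute)
  moreover have "\<forall>g\<in>G. \<forall>f\<in>?E. \<rho> g f \<in> ?E"
    using T_equivariant rep is_rep_linear_endo[OF rep] linear_endo_in linear_endo_scale by fastforce
  ultimately have "?E = W" using f0 eigen by (intro invariant_subspace_eq) auto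
  then show ?thesis by blast
qed

definition peval :: "'c poly \<Rightarrow> ('x \<Rightarrow> 'c) \<Rightarrow> 'x \<Rightarrow> 'c" where
  "peval p f = (\<lambda>x. \<Sum>i\<le>degree p. coeff p i * (T ^^ i) f x)"

lemma peval_upto:
  assumes "degree p \<le> N"
  shows "peval p f = (\<lambda>x. \<Sum>i\<le>N. coeff p i * (T ^^ i) f x)"
proof -
  have "(\<Sum>i\<le>N. coeff p i * (T ^^ i) f x) = (\<Sum>i\<le>degree p. coeff p i * (T ^^ i) f x)" for x
    by (rule sum.mono_neutral_right) (use assms in \<open>auto simp: coeff_eq_0\<close>)
  then show ?thesis by (simp add: peval_def)
qed

lemma peval_in_W: "f \<in> W \<Longrightarrow> peval p f \<in> W"
  unfolding peval_def
  by (rule csubspace_sum[OF subspace_W]) (auto intro: linear_endo_in[OF linear_endo_funpow[OF T_linear]])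

lemma peval_linear_factor:
  assumes f: "f \<in> W"
  shows "peval ([:-a, 1:] * r) f = (\<lambda>x. T (peval r f) x - a * peval r f x)"
proof -
  let ?N = "Suc (degree r)"
  have deg: "degree ([:-a, 1:] * r) \<le> ?N"
    using degree_mult_le[of "[:-a, 1:]" r] by simp
  have T_peval: "T (peval r f) = (\<lambda>x. \<Sum>i\<le>degree r. coeff r i * (T ^^ Suc i) f x)"
    unfolding peval_def
    by (subst linear_endo_sum[OF T_linear subspace_W])
      (auto intro: linear_endo_in[OF linear_endo_funpow[OF T_linear]] f)
  have "(\<Sum>i\<le>?N. coeff (pCons 0 r) i * (T ^^ i) f x) = T (peval r f) x" for x
    by (subst sum.atMost_Suc_shift) (simp add: T_peval)
  moreover have "(\<Sum>i\<le>?N. a * (coeff r i * (T ^^ i) f x)) = a * peval r f x" for x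
    using peval_upto[of r ?N f] by (simp add: sum_distrib_left[symmetric] del: sum.atMost_Suc)
  moreover have "coeff ([:-a, 1:] * r) i = coeff (pCons 0 r) i - a * coeff r i" for i
    by simp
  ultimately show ?thesis
    using peval_upto[OF deg, of f]
    by (simp del: sum.atMost_Suc add: left_diff_distrib sum_subtractf sum_distrib_left mult.assoc)
qed

lemma scalar_if_annihilated:
  assumes "p \<noteq> 0" "f \<in> W" "f \<noteq> (\<lambda>_. 0)" "peval p f = (\<lambda>_. 0)"
  shows "\<exists>c. \<forall>h\<in>W. T h = (\<lambda>x. c * h x)"
  using assms
proof (induction "degree p" arbitrary: p)
  case 0
  then have "peval p f = (\<lambda>x. coeff p 0 * f x)" using peval_upto[of p 0 f] by simp
  moreover have "coeff p 0 \<noteq> 0" using 0 by (metis leading_coeff_0_iff)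
  ultimately show ?case using 0 by (auto simp: fun_eq_iff)
next
  case (Suc n)
  obtain a where "poly p a = 0" using alg_closed Suc.hyps(2) by (metis zero_less_Suc)
  then obtain r where p: "p = [:-a, 1:] * r" by (metis poly_eq_0_iff_dvd dvd_def)
  with Suc.prems(1) have r: "r \<noteq> 0" by auto
  have "degree p = degree [:-a, 1:] + degree r"
    unfolding p by (rule degree_mult_eq) (use r in auto)
  with Suc.hyps(2) have deg_r: "n = degree r" by simp
  show ?case
  proof (cases "peval r f = (\<lambda>_. 0)")
    case True
    then show ?thesis using Suc.hyps(1)[OF deg_r r] Suc.prems by blast
  next
    case False
    have "(\<lambda>x. T (peval r f) x - a * peval r f x) = (\<lambda>_. 0)"
      using Suc.prems(4) peval_linear_factor[OF Suc.prems(2), of a r] p by simp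
    then have "T (peval r f) = (\<lambda>x. a * peval r f x)" by (simp add: fun_eq_iff)
    then show ?thesis using eigenvector_scalar peval_in_W[OF Suc.prems(2)] False by blast
  qed
qed

text \<open>The span of an orbit is a nonzero invariant subspace; in particular \<open>W\<close> is finite dimensional.\<close>
lemma span_orbit_eq:
  assumes f0: "f0 \<in> W" "f0 \<noteq> (\<lambda>_. 0)"
  shows "fun_vs.span (insert f0 ((\<lambda>h. \<rho> h f0) ` G)) = W"
proof -
  let ?S = "insert f0 ((\<lambda>h. \<rho> h f0) ` G)"
  let ?U = "fun_vs.span ?S"
  have rho_linear: "g \<in> G \<Longrightarrow> linear_endo W (\<rho> g)" for g
    by (rule is_rep_linear_endo[OF rep])
  have SW: "?S \<subseteq> W" using f0 rho_linear linear_endo_in by blast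
  have "\<rho> g f \<in> ?U" if g: "g \<in> G" and f: "f \<in> ?U" for g f
  proof -
    let ?P = "\<lambda>x. x \<in> W \<and> \<rho> g x \<in> ?U"
    have sub: "fun_vs.subspace (Collect ?P)"
      unfolding fun_vs.subspace_def
      using subspace_W linear_endo_zero[OF rho_linear[OF g] subspace_W]
        linear_endo_add[OF rho_linear[OF g]] linear_endo_scale[OF rho_linear[OF g]]
        fun_vs.span_zero fun_vs.span_add fun_vs.span_scale
      by (auto simp: csubspace_def zero_fun_def plus_fun_def fun_scale_def)
    have base: "?P x" if "x \<in> ?S" for x
      using that
    proof
      assume "x = f0"
      then show ?thesis using f0 g by (auto intro: fun_vs.span_base)
    next
      assume "x \<in> (\<lambda>h. \<rho> h f0) ` G"
      then obtain h where h: "h \<in> G" "x = \<rho> h f0" by blast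
      then have "\<rho> g x = \<rho> (g ** h) f0" using rep g f0 by (simp add: is_rep_def)
      then show ?thesis using h g closed SW by (auto intro: fun_vs.span_base)
    qed
    show ?thesis using fun_vs.span_induct[OF f sub base] by blast
  qed
  moreover have "?U \<subseteq> W"
    using SW subspace_W by (simp add: fun_vs.span_minimal csubspace_iff_subspace)
  ultimately show ?thesis
    using f0 by (intro invariant_subspace_eq) (auto simp: csubspace_iff_subspace fun_vs.span_base)
qed

lemma annihilating_poly_of_repetition:
  assumes "(T ^^ i) f = (T ^^ j) f" "i \<noteq> j"
  shows "\<exists>p. p \<noteq> 0 \<and> peval p f = (\<lambda>_. 0)"
proof -
  define p where "p = monom (1::'c) j - monom 1 i"
  have coeff_p: "coeff p k = (if k = j then 1 else 0) - (if k = i then 1 else 0)" for k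
    by (simp add: p_def coeff_monom)
  have "degree p \<le> max i j" by (rule degree_le) (auto simp: coeff_p)
  then have "peval p f = (\<lambda>x. \<Sum>k\<le>max i j. coeff p k * (T ^^ k) f x)" by (rule peval_upto)
  also have "\<dots> = (\<lambda>x. (T ^^ j) f x - (T ^^ i) f x)"
  proof
    fix x
    have "coeff p k * (T ^^ k) f x
        = (if k = j then (T ^^ k) f x else 0) - (if k = i then (T ^^ k) f x else 0)" for k
      by (simp add: coeff_p left_diff_distrib)
    then show "(\<Sum>k\<le>max i j. coeff p k * (T ^^ k) f x) = (T ^^ j) f x - (T ^^ i) f x"
      by (simp only: sum_subtractf) (simp add: sum.delta)
  qed
  finally show ?thesis using assms coeff_p[of j] by (intro exI[of _ p]) auto
qed

lemma annihilating_poly_of_dependent: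
  assumes inj: "inj_on (\<lambda>i. (T ^^ i) f) {..m}" and t: "finite t" "t \<subseteq> (\<lambda>i. (T ^^ i) f) ` {..m}"
    and comb: "(\<Sum>v\<in>t. fun_scale (u v) v) = 0" and nontriv: "\<exists>v\<in>t. u v \<noteq> 0"
  shows "\<exists>p. p \<noteq> 0 \<and> peval p f = (\<lambda>_. 0)"
proof -
  let ?K = "{k\<in>{..m}. (T ^^ k) f \<in> t}"
  define c where "c k = (if (T ^^ k) f \<in> t then u ((T ^^ k) f) else 0)" for k
  define p where "p = (\<Sum>k\<le>m. monom (c k) k)"
  have coeff_p: "coeff p k = (if k \<le> m then c k else 0)" for k
    by (simp add: p_def coeff_sum coeff_monom)
  obtain k where "k \<le> m" "(T ^^ k) f \<in> t" "u ((T ^^ k) f) \<noteq> 0" using nontriv t(2) by blast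
  then have "coeff p k \<noteq> 0" by (simp add: coeff_p c_def)
  then have "p \<noteq> 0" by auto
  have "degree p \<le> m" by (rule degree_le) (simp add: coeff_p)
  then have "peval p f = (\<lambda>x. \<Sum>k\<le>m. c k * (T ^^ k) f x)"
    by (simp add: peval_upto coeff_p)
  also have "\<dots> = (\<lambda>x. \<Sum>k\<in>?K. u ((T ^^ k) f) * (T ^^ k) f x)"
    by (rule ext, subst sum.inter_filter) (simp_all add: c_def if_distrib if_distribR cong: if_cong)
  also have "\<dots> = (\<lambda>x. \<Sum>v\<in>t. u v * v x)"
  proof -
    have "(\<lambda>k. (T ^^ k) f) ` ?K = t" using t(2) by auto
    moreover have "inj_on (\<lambda>k. (T ^^ k) f) ?K" using inj by (rule inj_on_subset) auto
    ultimately show ?thesis by (metis (no_types, lifting) sum.reindex_cong)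
  qed
  also have "\<dots> = (\<lambda>_. 0)"
    using fun_cong[OF comb] by (simp add: fun_scale_def fun_eq_iff sum_fun_apply)
  finally show ?thesis using \<open>p \<noteq> 0\<close> by blast
qed

lemma annihilating_poly_exists:
  assumes f0: "f0 \<in> W" "f0 \<noteq> (\<lambda>_. 0)"
  shows "\<exists>p. p \<noteq> 0 \<and> peval p f0 = (\<lambda>_. 0)"
proof -
  let ?S = "insert f0 ((\<lambda>h. \<rho> h f0) ` G)"
  define m where "m = card ?S"
  show ?thesis
  proof (cases "inj_on (\<lambda>i. (T ^^ i) f0) {..m}")
    case False
    then show ?thesis
      unfolding inj_on_def by (metis annihilating_poly_of_repetition)
  next
    case True
    let ?V = "(\<lambda>i. (T ^^ i) f0) ` {..m}"
    have "?V \<subseteq> fun_vs.span ?S"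
      using span_orbit_eq[OF f0] linear_endo_in[OF linear_endo_funpow[OF T_linear] f0(1)] by auto
    moreover have "card ?V = Suc m" using True by (simp add: card_image)
    ultimately have "fun_vs.dependent ?V"
      using fun_vs.independent_span_bound[of ?S ?V] finite_G by (auto simp: m_def)
    then obtain t u where "finite t" "t \<subseteq> ?V" "(\<Sum>v\<in>t. fun_scale (u v) v) = 0" "\<exists>v\<in>t. u v \<noteq> 0"
      unfolding fun_vs.dependent_explicit by blast
    then show ?thesis using annihilating_poly_of_dependent[OF True] by blast
  qed
qed

theorem scalar: "\<exists>c. \<forall>f\<in>W. T f = (\<lambda>x. c * f x)"
proof -
  obtain f0 where "f0 \<in> W" "f0 \<noteq> (\<lambda>_. 0)" using irred_rep_nonzero[OF irred] by blast
  then show ?thesis using annihilating_poly_exists scalar_if_annihilated by blast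
qed

end

section \<open>Operators defined by class functions\<close>

definition matrix_group :: "('a::semiring_1^'n::finite^'n) set \<Rightarrow> bool" where
  "matrix_group G \<longleftrightarrow> (\<forall>g\<in>G. \<forall>h\<in>G. g ** h \<in> G) \<and> (\<forall>g\<in>G. \<exists>g'\<in>G. g ** g' = mat 1 \<and> g' ** g = mat 1)"

definition class_function :: "('a::semiring_1^'n::finite^'n) set \<Rightarrow> ('a^'n^'n \<Rightarrow> 'c) \<Rightarrow> bool" where
  "class_function G c \<longleftrightarrow> (\<forall>k\<in>G. \<forall>k'\<in>G. k ** k' = mat 1 \<longrightarrow> (\<forall>h\<in>G. c (k ** h ** k') = c h))"

definition group_sum_op :: "('f::field^'n::finite^'n) set \<Rightarrow> ('f^'n^'n \<Rightarrow> ('x \<Rightarrow> 'c::field) \<Rightarrow> 'x \<Rightarrow> 'c)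
    \<Rightarrow> ('f^'n^'n \<Rightarrow> 'c) \<Rightarrow> ('x \<Rightarrow> 'c) \<Rightarrow> 'x \<Rightarrow> 'c" where
  "group_sum_op G \<rho> c \<phi> = (\<lambda>x. \<Sum>h\<in>G. c h * \<rho> h \<phi> x)"

lemma group_sum_op_linear:
  assumes rep: "is_rep G W \<rho>" and fin: "finite G"
  shows "linear_endo W (group_sum_op G \<rho> c)"
proof -
  have W: "csubspace W" using rep by (simp add: is_rep_def)
  have L: "g \<in> G \<Longrightarrow> linear_endo W (\<rho> g)" for g by (rule is_rep_linear_endo[OF rep])
  show ?thesis
    unfolding linear_endo_def
  proof (intro conjI ballI allI)
    fix f assume "f \<in> W"
    then show "group_sum_op G \<rho> c f \<in> W"
      unfolding group_sum_op_def by (intro csubspace_sum[OF W fin]) (use L linear_endo_in in blast)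
  next
    fix f h assume f: "f \<in> W" and h: "h \<in> W"
    have "\<rho> g (\<lambda>x. f x + h x) = (\<lambda>x. \<rho> g f x + \<rho> g h x)" if "g \<in> G" for g
      using linear_endo_add[OF L[OF that] f h] .
    then show "group_sum_op G \<rho> c (\<lambda>x. f x + h x) = (\<lambda>x. group_sum_op G \<rho> c f x + group_sum_op G \<rho> c h x)"
      by (simp add: group_sum_op_def distrib_left sum.distrib)
  next
    fix d f assume f: "f \<in> W"
    have "\<rho> g (\<lambda>x. d * f x) = (\<lambda>x. d * \<rho> g f x)" if "g \<in> G" for g
      using linear_endo_scale[OF L[OF that] f] .
    then show "group_sum_op G \<rho> c (\<lambda>x. d * f x) = (\<lambda>x. d * group_sum_op G \<rho> c f x)"
      by (simp add: group_sum_op_def sum_distrib_left mult.left_commute)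
  qed
qed

lemma group_sum_op_equivariant:
  assumes rep: "is_rep G W \<rho>" and fin: "finite G" and grp: "matrix_group G"
    and c: "class_function G c" and k: "k \<in> G" and f: "f \<in> W"
  shows "group_sum_op G \<rho> c (\<rho> k f) = \<rho> k (group_sum_op G \<rho> c f)"
proof -
  have W: "csubspace W" using rep by (simp add: is_rep_def)
  have mult: "\<rho> (g ** h) f = \<rho> g (\<rho> h f)" if "g \<in> G" "h \<in> G" for g h
    using rep that f by (simp add: is_rep_def)
  obtain k' where k': "k' \<in> G" "k ** k' = mat 1" "k' ** k = mat 1"
    using grp k by (auto simp: matrix_group_def)
  have closed: "g ** h \<in> G" if "g \<in> G" "h \<in> G" for g h
    using grp that by (simp add: matrix_group_def)
  have "\<rho> k (group_sum_op G \<rho> c f) = (\<lambda>x. \<Sum>h\<in>G. c h * \<rho> k (\<rho> h f) x)"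
    unfolding group_sum_op_def
    by (rule linear_endo_sum[OF is_rep_linear_endo[OF rep k] W fin])
      (use is_rep_linear_endo[OF rep] linear_endo_in f in blast)
  also have "\<dots> = (\<lambda>x. \<Sum>h\<in>G. c h * \<rho> (k ** h) f x)" using mult k by simp
  also have "\<dots> = (\<lambda>x. \<Sum>h\<in>G. c h * \<rho> (h ** k) f x)"
  proof (rule ext, rule sum.reindex_bij_witness[where i = "\<lambda>h. k' ** h ** k" and j = "\<lambda>h. k ** h ** k'"])
    fix x a assume a: "a \<in> G"
    show "k ** (k' ** a ** k) ** k' = a" "k' ** (k ** a ** k') ** k = a"
      by (metis k'(2,3) matrix_mul_assoc matrix_mul_lid matrix_mul_rid)+
    show "k' ** a ** k \<in> G" "k ** a ** k' \<in> G" using closed a k k'(1) by blast+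
    have "c (k ** a ** k') = c a" using c k k' a by (simp add: class_function_def)
    moreover have "k ** a ** k' ** k = k ** a" by (metis k'(3) matrix_mul_assoc matrix_mul_rid)
    ultimately show "c (k ** a ** k') * \<rho> (k ** a ** k' ** k) f x = c a * \<rho> (k ** a) f x" by simp
  qed
  also have "\<dots> = group_sum_op G \<rho> c (\<rho> k f)"
    unfolding group_sum_op_def using mult k by simp
  finally show ?thesis by simp
qed

lemma group_sum_op_scalar:
  fixes W :: "('x \<Rightarrow> 'c::field) set"
  assumes irr: "irred_rep G W \<rho>" and fin: "finite G" and grp: "matrix_group G"
    and c: "class_function G c" and alg: "\<forall>p :: 'c poly. 0 < degree p \<longrightarrow> (\<exists>z. poly p z = 0)"
  shows "\<exists>l. \<forall>f\<in>W. group_sum_op G \<rho> c f = (\<lambda>x. l * f x)"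
proof -
  have rep: "is_rep G W \<rho>" using irr by (simp add: irred_rep_def)
  interpret schur G W \<rho> "group_sum_op G \<rho> c"
    using irr fin grp alg group_sum_op_linear[OF rep fin] group_sum_op_equivariant[OF rep fin grp c]
    by unfold_locales (auto simp: matrix_group_def)
  show ?thesis by (rule scalar)
qed

lemma central_element_scalar:
  fixes W :: "('x \<Rightarrow> 'c::field) set"
  assumes irr: "irred_rep G W \<rho>" and fin: "finite G" and grp: "matrix_group G"
    and z: "z \<in> G" "\<forall>g\<in>G. z ** g = g ** z"
    and alg: "\<forall>p :: 'c poly. 0 < degree p \<longrightarrow> (\<exists>z. poly p z = 0)"
  shows "\<exists>l. \<forall>f\<in>W. \<rho> z f = (\<lambda>x. l * f x)"
proof -
  have rep: "is_rep G W \<rho>" using irr by (simp add: irred_rep_def)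
  have "\<forall>g\<in>G. \<forall>f\<in>W. \<rho> z (\<rho> g f) = \<rho> g (\<rho> z f)"
    using rep z unfolding is_rep_def by metis
  then interpret schur G W \<rho> "\<rho> z"
    using irr fin grp alg is_rep_linear_endo[OF rep z(1)]
    by unfold_locales (auto simp: matrix_group_def)
  show ?thesis by (rule scalar)
qed

lemma sorth_group_subset: "sorth_group B \<subseteq> orth_group B"
  by (auto simp: sorth_group_def)

lemma mat_1_in_sorth_group: "mat 1 \<in> sorth_group B"
  by (simp add: sorth_group_def mat_1_in_orth_group)

lemma sorth_group_mult: "g \<in> sorth_group B \<Longrightarrow> h \<in> sorth_group B \<Longrightarrow> g ** h \<in> sorth_group B"
  by (simp add: sorth_group_def orth_group_mult det_mul)

lemma matrix_group_sorth_group: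
  assumes "det B \<noteq> 0"
  shows "matrix_group (sorth_group B)"
  unfolding matrix_group_def
proof (intro conjI ballI)
  fix g assume g: "g \<in> sorth_group B"
  then obtain h where h: "h \<in> orth_group B" "g ** h = mat 1" "h ** g = mat 1"
    using orth_group_inverse[OF _ assms] by (auto simp: sorth_group_def)
  then have "det h = 1" using g det_mul[of g h] by (simp add: sorth_group_def)
  then show "\<exists>g'\<in>sorth_group B. g ** g' = mat 1 \<and> g' ** g = mat 1"
    using h by (auto simp: sorth_group_def)
qed (rule sorth_group_mult)

lemma det_orth_not_sorth:
  "g \<in> orth_group B \<Longrightarrow> g \<notin> sorth_group B \<Longrightarrow> det B \<noteq> 0 \<Longrightarrow> det g = -1"
  using det_orth_group[of g B] by (auto simp: sorth_group_def)

lemma uminus_in_sorth_group_iff: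
  "- g \<in> sorth_group B \<longleftrightarrow> g \<in> orth_group B \<and> (-1) ^ CARD('n) * det g = 1"
  for g :: "'a::field^'n::finite^'n"
  by (simp add: sorth_group_def orth_group_uminus det_uminus)

lemma det_scaled_in_sorth_group:
  fixes g :: "'a::field^'n::finite^'n"
  assumes "odd CARD('n)" "g \<in> orth_group B" "det B \<noteq> 0"
  shows "mat (det g) ** g \<in> sorth_group B"
proof -
  have "det g = 1 \<or> det g = -1" by (rule det_orth_group[OF assms(2,3)])
  then show ?thesis
    using assms(1,2) by (auto simp: sorth_group_def det_mul det_mat mat_uminus matrix_mul_uminus_left
        orth_group_uminus)
qed

lemma det_scaled_mult:
  fixes g h :: "'a::field^'n::finite^'n"
  shows "mat (det (g ** h)) ** (g ** h) = (mat (det g) ** g) ** (mat (det h) ** h)"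
  by (simp add: det_mul matrix_mul_assoc mat_mult_mat[symmetric])
    (metis mat_mult_commute matrix_mul_assoc)

lemma det_one_minus_orth_eq_0:
  fixes g :: "'f::field^'n::finite^'n"
  assumes "(2::'f) \<noteq> 0" "g \<in> orth_group B" "det B \<noteq> 0" "(-1) ^ CARD('n) * det g = -1"
  shows "det (mat 1 - g) = 0"
proof -
  have "det (mat 1 - g) = ((-1) ^ CARD('n) * det g) * det (mat 1 - g)"
    by (rule det_one_minus_orth[OF assms(2,3)])
  also have "\<dots> = - det (mat 1 - g)" by (simp only: assms(4) mult_minus1)
  finally have "det (mat 1 - g) + det (mat 1 - g) = 0" by (rule eq_neg_iff_add_eq_0[THEN iffD1])
  then show ?thesis using assms(1) by (simp add: mult_2[symmetric])
qed

lemma conj_in_sorth_group: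
  assumes "k ** k' = mat 1" "k \<in> orth_group B" "k' \<in> orth_group B" "h \<in> sorth_group B"
  shows "k ** h ** k' \<in> sorth_group B"
  using assms det_conj[OF assms(1)] by (simp add: sorth_group_def orth_group_mult)

section \<open>The zeta integral on \<open>O(V)\<close>\<close>

locale zeta_setting =
  fixes B :: "'f::{finite,field}^'n::finite^'n" and sq :: "'c::field" and chi :: "'f \<Rightarrow> 'c"
  assumes two: "(2::'f) \<noteq> 0" and B_nondeg: "det B \<noteq> 0" and chi: "multiplicative_char chi"
begin

definition zeta_kernel :: "'f^'n^'n \<Rightarrow> 'c" where
  "zeta_kernel g = M_V B sq (f0_V B chi) (iota g (mat 1))"

definition j_kernel :: "'f^'n^'n \<Rightarrow> 'c" where
  "j_kernel h = inverse (lie_sqrt_card B sq) *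
     (if det (mat 1 + h) = 0 then 0 else chi (det (mat 1 + h)))"

definition chi_factor :: 'c where
  "chi_factor = inverse (chi (- 2)) ^ CARD('n)"

lemma Z_V_eq: "Z_V B r (M_V B sq (f0_V B chi)) \<phi> = (\<lambda>x. \<Sum>g\<in>orth_group B. zeta_kernel g * r g \<phi> x)"
  by (simp add: Z_V_def zeta_kernel_def)

lemma zeta_kernel_uminus: "g \<in> orth_group B \<Longrightarrow> zeta_kernel (- g) = chi_factor * j_kernel g"
  by (simp add: zeta_kernel_def j_kernel_def chi_factor_def M_V_f0_V_iota[OF two chi] orth_group_uminus)

lemma zeta_kernel_vanishes:
  "g \<in> orth_group B \<Longrightarrow> (-1) ^ CARD('n) * det g = -1 \<Longrightarrow> zeta_kernel g = 0"
  by (simp add: zeta_kernel_def M_V_f0_V_iota[OF two chi] det_one_minus_orth_eq_0[OF two _ B_nondeg])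

lemma zeta_kernel_conj:
  assumes "k ** k' = mat 1" "k \<in> orth_group B" "k' \<in> orth_group B" "h \<in> orth_group B"
  shows "zeta_kernel (k ** h ** k') = zeta_kernel h"
  using assms
  by (simp add: zeta_kernel_def M_V_f0_V_iota[OF two chi] orth_group_mult conj_one_minus det_conj)

lemma class_function_j_kernel: "class_function (sorth_group B) j_kernel"
  by (simp add: class_function_def j_kernel_def conj_one_plus det_conj)

lemma sum_sorth_conj:
  assumes k: "k ** k' = mat 1" "k' ** k = mat 1" "k \<in> orth_group B" "k' \<in> orth_group B"
  shows "(\<Sum>g\<in>sorth_group B. zeta_kernel g * a (k ** g ** k')) = (\<Sum>h\<in>sorth_group B. zeta_kernel h * a h)"
proof (rule sum.reindex_bij_witness[where j = "\<lambda>g. k ** g ** k'" and i = "\<lambda>h. k' ** h ** k"])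
  fix g assume g: "g \<in> sorth_group B"
  show "k' ** (k ** g ** k') ** k = g" "k ** (k' ** g ** k) ** k' = g"
    by (metis k(1,2) matrix_mul_assoc matrix_mul_lid matrix_mul_rid)+
  show "k ** g ** k' \<in> sorth_group B" "k' ** g ** k \<in> sorth_group B"
    using conj_in_sorth_group k g by blast+
  show "zeta_kernel (k ** g ** k') * a (k ** g ** k') = zeta_kernel g * a (k ** g ** k')"
    using zeta_kernel_conj[OF k(1,3,4)] g sorth_group_subset by auto
qed

end

locale so_rep = zeta_setting B sq chi
  for B :: "'f::{finite,field}^'n::finite^'n" and sq :: "'c::field" and chi :: "'f \<Rightarrow> 'c" +
  fixes W :: "('x \<Rightarrow> 'c) set" and \<rho> :: "'f^'n^'n \<Rightarrow> ('x \<Rightarrow> 'c) \<Rightarrow> 'x \<Rightarrow> 'c"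
  assumes irr: "irred_rep (sorth_group B) W \<rho>"
    and alg_closed: "\<forall>p :: 'c poly. 0 < degree p \<longrightarrow> (\<exists>z. poly p z = 0)"
begin

lemma rep: "is_rep (sorth_group B) W \<rho>"
  using irr by (simp add: irred_rep_def)

lemma rho_mult: "g \<in> sorth_group B \<Longrightarrow> h \<in> sorth_group B \<Longrightarrow> f \<in> W \<Longrightarrow> \<rho> (g ** h) f = \<rho> g (\<rho> h f)"
  using rep by (simp add: is_rep_def)

lemma j_kernel_op_scalar: "\<exists>l. \<forall>f\<in>W. group_sum_op (sorth_group B) \<rho> j_kernel f = (\<lambda>x. l * f x)"
  using irr matrix_group_sorth_group[OF B_nondeg] class_function_j_kernel alg_closed
  by (intro group_sum_op_scalar) simp_all

lemma j_factor_eq_scalar: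
  assumes "\<forall>f\<in>W. group_sum_op (sorth_group B) \<rho> j_kernel f = (\<lambda>x. l * f x)"
  shows "j_factor B sq chi W \<rho> = l"
proof -
  have "(\<Sum>g\<in>{g\<in>sorth_group B. det (mat 1 + g) \<noteq> 0}. chi (det (mat 1 + g)) * \<rho> g \<phi> x)
      = (\<Sum>g\<in>sorth_group B. (if det (mat 1 + g) = 0 then 0 else chi (det (mat 1 + g))) * \<rho> g \<phi> x)"
    for \<phi> x by (subst sum.inter_filter) (auto intro!: sum.cong)
  then have "(\<lambda>\<phi> x. inverse (lie_sqrt_card B sq) *
      (\<Sum>g\<in>{g\<in>sorth_group B. det (mat 1 + g) \<noteq> 0}. chi (det (mat 1 + g)) * \<rho> g \<phi> x))
      = group_sum_op (sorth_group B) \<rho> j_kernel"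
    by (simp add: fun_eq_iff group_sum_op_def j_kernel_def sum_distrib_left mult.assoc)
  then show ?thesis
    using scalar_of_eq[OF irred_rep_nonzero[OF irr] assms] by (simp add: j_factor_def)
qed

lemma Z_V_odd:
  assumes odd: "odd CARD('n)" and r: "is_rep (orth_group B) W r"
    "\<forall>g\<in>sorth_group B. \<forall>f\<in>W. r g f = \<rho> g f" "\<forall>f\<in>W. r (- mat 1) f = f"
    and f: "f \<in> W"
  shows "Z_V B r (M_V B sq (f0_V B chi)) f = (\<lambda>x. chi_factor * group_sum_op (sorth_group B) \<rho> j_kernel f x)"
proof
  fix x
  let ?O = "orth_group B" and ?SO = "sorth_group B"
  have one_neq: "(1::'f) \<noteq> -1" using two by (metis one_add_one add_eq_0_iff)
  have r_uminus: "r (- h) f = \<rho> h f" if h: "h \<in> ?SO" for h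
  proof -
    have "h \<in> ?O" using h sorth_group_subset by blast
    then have "r ((- mat 1) ** h) f = r (- mat 1) (r h f)" "r h f \<in> W"
      using r(1) f by (simp_all add: is_rep_def orth_group_uminus mat_1_in_orth_group)
    then show ?thesis using r(2,3) h f by (simp add: matrix_mul_uminus_left)
  qed
  have "(\<Sum>g\<in>?O. zeta_kernel g * r g f x)
      = (\<Sum>g\<in>?O - ?SO. zeta_kernel g * r g f x) + (\<Sum>g\<in>?SO. zeta_kernel g * r g f x)"
    by (rule sum.subset_diff[OF sorth_group_subset]) simp
  also have "(\<Sum>g\<in>?SO. zeta_kernel g * r g f x) = 0"
    using zeta_kernel_vanishes odd by (simp add: sorth_group_def)
  also have "(\<Sum>g\<in>?O - ?SO. zeta_kernel g * r g f x) = (\<Sum>h\<in>?SO. zeta_kernel (- h) * r (- h) f x)"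
  proof (rule sum.reindex_bij_witness[where i = uminus and j = uminus])
    fix a assume "a \<in> ?O - ?SO"
    then show "- a \<in> ?SO"
      using det_orth_not_sorth[OF _ _ B_nondeg, of a] odd by (simp add: uminus_in_sorth_group_iff)
  next
    fix b assume "b \<in> ?SO"
    then show "- b \<in> ?O - ?SO"
      using odd one_neq by (auto simp: orth_group_uminus sorth_group_def det_uminus)
  qed simp_all
  also have "\<dots> = (\<Sum>h\<in>?SO. chi_factor * (j_kernel h * \<rho> h f x))"
    using zeta_kernel_uminus r_uminus sorth_group_subset by (intro sum.cong) auto
  finally show "Z_V B r (M_V B sq (f0_V B chi)) f x = chi_factor * group_sum_op ?SO \<rho> j_kernel f x"
    by (simp add: Z_V_eq group_sum_op_def sum_distrib_left)
qed

text \<open>For odd \<open>d\<close>, \<open>g \<mapsto> det g \<cdot> g\<close> is a homomorphism \<open>O(V) \<rightarrow> SO(V)\<close> killing \<open>-1\<close>.\<close>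
lemma rho_extension_odd:
  assumes odd: "odd CARD('n)"
  shows "\<exists>r. is_rep (orth_group B) W r \<and> (\<forall>g\<in>sorth_group B. \<forall>f\<in>W. r g f = \<rho> g f)
    \<and> (\<forall>f\<in>W. r (mat (-1)) f = f)"
proof -
  let ?s = "\<lambda>g::'f^'n^'n. mat (det g) ** g"
  have s_SO: "?s g \<in> sorth_group B" if "g \<in> orth_group B" for g
    using odd that B_nondeg by (rule det_scaled_in_sorth_group)
  have L: "linear_endo W (\<rho> (?s g))" if "g \<in> orth_group B" for g
    by (rule is_rep_linear_endo[OF rep s_SO[OF that]])
  have "is_rep (orth_group B) W (\<lambda>g. \<rho> (?s g))"
    unfolding is_rep_def
  proof (intro conjI ballI allI)
    show "csubspace W" using rep by (simp add: is_rep_def)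
    show "\<rho> (?s g) f \<in> W" if "g \<in> orth_group B" "f \<in> W" for g f
      using L that linear_endo_in by blast
    show "\<rho> (?s g) (\<lambda>x. f x + h x) = (\<lambda>x. \<rho> (?s g) f x + \<rho> (?s g) h x)"
      if "g \<in> orth_group B" "f \<in> W" "h \<in> W" for g f h
      using L that linear_endo_add by blast
    show "\<rho> (?s g) (\<lambda>x. c * f x) = (\<lambda>x. c * \<rho> (?s g) f x)" if "g \<in> orth_group B" "f \<in> W" for g c f
      using L that linear_endo_scale by blast
    show "\<rho> (?s (mat 1)) f = f" if "f \<in> W" for f
      using rep that by (simp add: is_rep_def)
    show "\<rho> (?s (g ** h)) f = \<rho> (?s g) (\<rho> (?s h) f)"
      if "g \<in> orth_group B" "h \<in> orth_group B" "f \<in> W" for g h f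
      using rho_mult[OF s_SO s_SO] that by (simp add: det_scaled_mult)
  qed
  moreover have "\<rho> (?s g) f = \<rho> g f" if "g \<in> sorth_group B" for g f
    using that by (simp add: sorth_group_def)
  moreover have "\<rho> (?s (mat (-1))) f = f" if "f \<in> W" for f
    using rep that odd by (simp add: is_rep_def det_mat mat_mult_mat)
  ultimately show ?thesis by blast
qed

lemma sum_orth_eq_sum_sorth_even:
  assumes "even CARD('n)"
  shows "(\<Sum>g\<in>orth_group B. zeta_kernel g * a g) = (\<Sum>g\<in>sorth_group B. zeta_kernel g * a g)"
proof (rule sum.mono_neutral_right)
  show "\<forall>g\<in>orth_group B - sorth_group B. zeta_kernel g * a g = 0"
    using assms det_orth_not_sorth[OF _ _ B_nondeg] zeta_kernel_vanishes by simp
qed (simp_all add: sorth_group_subset)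

lemma sum_sorth_zeta_kernel_even:
  assumes even: "even CARD('n)" and omega: "\<forall>f\<in>W. \<rho> (- mat 1) f = (\<lambda>x. \<omega> * f x)"
    and f: "f \<in> W"
  shows "(\<Sum>h\<in>sorth_group B. zeta_kernel h * \<rho> h f x)
    = chi_factor * \<omega> * group_sum_op (sorth_group B) \<rho> j_kernel f x"
proof -
  let ?SO = "sorth_group B"
  have neg1: "- mat 1 \<in> ?SO"
    using even by (simp add: uminus_in_sorth_group_iff mat_1_in_orth_group)
  have "(\<Sum>h\<in>?SO. zeta_kernel h * \<rho> h f x) = (\<Sum>h\<in>?SO. zeta_kernel (- h) * \<rho> (- h) f x)"
    by (rule sum.reindex_bij_witness[where i = uminus and j = uminus])
      (use even in \<open>auto simp: sorth_group_def orth_group_uminus det_uminus\<close>)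
  also have "\<dots> = (\<Sum>h\<in>?SO. chi_factor * \<omega> * (j_kernel h * \<rho> h f x))"
  proof (rule sum.cong[OF refl])
    fix h assume h: "h \<in> ?SO"
    have "\<rho> (- h) f = \<rho> h (\<rho> (- mat 1) f)"
      using rho_mult[OF h neg1 f] by (simp add: matrix_mul_uminus_right)
    also have "\<dots> = (\<lambda>x. \<omega> * \<rho> h f x)"
      using omega f linear_endo_scale[OF is_rep_linear_endo[OF rep h] f] by simp
    finally show "zeta_kernel (- h) * \<rho> (- h) f x = chi_factor * \<omega> * (j_kernel h * \<rho> h f x)"
      using zeta_kernel_uminus h sorth_group_subset by auto
  qed
  finally show ?thesis by (simp add: group_sum_op_def sum_distrib_left mult.assoc)
qed

lemma Z_V_even:
  assumes even: "even CARD('n)" and omega: "\<forall>f\<in>W. \<rho> (- mat 1) f = (\<lambda>x. \<omega> * f x)"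
    and r: "\<forall>g\<in>sorth_group B. \<forall>f\<in>W. r g f = \<rho> g f" and f: "f \<in> W"
  shows "Z_V B r (M_V B sq (f0_V B chi)) f
    = (\<lambda>x. chi_factor * \<omega> * group_sum_op (sorth_group B) \<rho> j_kernel f x)"
  using r f sum_sorth_zeta_kernel_even[OF even omega f]
  by (simp add: Z_V_eq sum_orth_eq_sum_sorth_even[OF even])

lemma ind_space_translate:
  assumes F: "F \<in> ind_space B W \<rho>" and k: "k \<in> orth_group B" "k ** k' = mat 1" "k' \<in> orth_group B"
    and g: "g \<in> sorth_group B"
  shows "F (k ** g, x) = \<rho> (k ** g ** k') (\<lambda>x. F (k, x)) x"
proof -
  have "k ** g = (k ** g ** k') ** k"
    using matrix_left_right_inverse[THEN iffD1, OF k(2)] by (metis matrix_mul_assoc matrix_mul_rid)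
  then have "(\<lambda>x. F (k ** g, x)) = (\<lambda>x. F ((k ** g ** k') ** k, x))"
    by (rule arg_cong[where f = "\<lambda>h x. F (h, x)"])
  also have "\<dots> = \<rho> (k ** g ** k') (\<lambda>x. F (k, x))"
    using F conj_in_sorth_group[OF k(2) k(1) k(3) g] k(1) by (simp add: ind_space_def)
  finally show ?thesis by (metis fun_cong)
qed

lemma Z_V_induced:
  assumes even: "even CARD('n)" and omega: "\<forall>f\<in>W. \<rho> (- mat 1) f = (\<lambda>x. \<omega> * f x)"
    and l: "\<forall>f\<in>W. group_sum_op (sorth_group B) \<rho> j_kernel f = (\<lambda>x. l * f x)"
    and F: "F \<in> ind_space B W \<rho>"
  shows "Z_V B (ind_act B) (M_V B sq (f0_V B chi)) F = (\<lambda>y. chi_factor * \<omega> * l * F y)"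
proof
  fix y :: "('f^'n^'n) \<times> 'x"
  obtain g' x where y: "y = (g', x)" by (cases y)
  have F_zero: "\<forall>g. g \<notin> orth_group B \<longrightarrow> (\<lambda>x. F (g, x)) = (\<lambda>_. 0)"
    using F by (simp add: ind_space_def)
  show "Z_V B (ind_act B) (M_V B sq (f0_V B chi)) F y = chi_factor * \<omega> * l * F y"
  proof (cases "g' \<in> orth_group B")
    case False
    then show ?thesis using F_zero by (simp add: Z_V_eq ind_act_def y fun_eq_iff)
  next
    case True
    obtain gi where gi: "gi \<in> orth_group B" "g' ** gi = mat 1" "gi ** g' = mat 1"
      using orth_group_inverse[OF True B_nondeg] by blast
    define \<psi> where "\<psi> = (\<lambda>x. F (g', x))"
    have "(\<Sum>g\<in>orth_group B. zeta_kernel g * ind_act B g F (g', x))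
        = (\<Sum>g\<in>sorth_group B. zeta_kernel g * \<rho> (g' ** g ** gi) \<psi> x)"
      using True ind_space_translate[OF F True gi(2,1)]
      by (simp add: ind_act_def sum_orth_eq_sum_sorth_even[OF even] \<psi>_def)
    also have "\<dots> = (\<Sum>h\<in>sorth_group B. zeta_kernel h * \<rho> h \<psi> x)"
      by (rule sum_sorth_conj[OF gi(2,3) True gi(1)])
    also have "\<dots> = chi_factor * \<omega> * l * \<psi> x"
      using sum_sorth_zeta_kernel_even[OF even omega] F True l by (simp add: \<psi>_def ind_space_def)
    finally show ?thesis by (simp add: Z_V_eq y \<psi>_def)
  qed
qed

lemma ind_space_nonzero: "\<exists>F\<in>ind_space B W \<rho>. F \<noteq> (\<lambda>_. 0)"
proof -
  obtain f0 where f0: "f0 \<in> W" "f0 \<noteq> (\<lambda>_. 0)" using irred_rep_nonzero[OF irr] by blast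
  define F where "F = (\<lambda>(g, x). if g \<in> sorth_group B then \<rho> g f0 x else 0)"
  have F_slice: "(\<lambda>x. F (g, x)) = (if g \<in> sorth_group B then \<rho> g f0 else (\<lambda>_. 0))" for g
    by (auto simp: F_def)
  have W: "csubspace W" using rep by (simp add: is_rep_def)
  have "F \<in> ind_space B W \<rho>"
    unfolding ind_space_def mem_Collect_eq
  proof (intro conjI allI ballI impI)
    fix g assume "g \<in> orth_group B"
    show "(\<lambda>x. F (g, x)) \<in> W"
      using f0 rep W by (simp add: F_slice is_rep_def csubspace_def)
  next
    fix g assume "g \<notin> orth_group B"
    then show "(\<lambda>x. F (g, x)) = (\<lambda>_. 0)" using sorth_group_subset by (auto simp: F_slice)
  next
    fix h g assume h: "h \<in> sorth_group B" and g: "g \<in> orth_group B"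
    show "(\<lambda>x. F (h ** g, x)) = \<rho> h (\<lambda>x. F (g, x))"
    proof (cases "g \<in> sorth_group B")
      case True
      then show ?thesis using sorth_group_mult[OF h True] rho_mult[OF h True f0(1)] by (simp add: F_slice)
    next
      case False
      obtain hi where "hi \<in> sorth_group B" "hi ** h = mat 1"
        using matrix_group_sorth_group[OF B_nondeg] h by (auto simp: matrix_group_def)
      then have "h ** g \<notin> sorth_group B"
        using False sorth_group_mult by (metis matrix_mul_assoc matrix_mul_lid)
      then show ?thesis
        using False linear_endo_zero[OF is_rep_linear_endo[OF rep h] W] by (simp add: F_slice)
    qed
  qed
  moreover have "(\<lambda>x. F (mat 1, x)) = f0"
    using f0 rep mat_1_in_sorth_group by (simp add: F_slice is_rep_def)
  then have "F \<noteq> (\<lambda>_. 0)" using f0(2) by auto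
  ultimately show ?thesis by blast
qed

lemma Gamma_SO_odd:
  assumes odd: "odd CARD('n)"
    and l: "\<forall>f\<in>W. group_sum_op (sorth_group B) \<rho> j_kernel f = (\<lambda>x. l * f x)"
  shows "Gamma_SO B sq chi W \<rho> = chi_factor * l"
proof -
  let ?P = "\<lambda>r. is_rep (orth_group B) W r \<and> (\<forall>g\<in>sorth_group B. \<forall>f\<in>W. r g f = \<rho> g f)
    \<and> (\<forall>f\<in>W. r (mat (-1)) f = f)"
  define r where "r = (SOME r. ?P r)"
  have "?P r" unfolding r_def using rho_extension_odd[OF odd] by (rule someI_ex)
  then have r: "is_rep (orth_group B) W r" "\<forall>g\<in>sorth_group B. \<forall>f\<in>W. r g f = \<rho> g f"
      "\<forall>f\<in>W. r (- mat 1) f = f"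
    by (simp_all add: mat_uminus)
  have "Gamma_SO B sq chi W \<rho> = Gamma_O B sq chi W r"
    using odd by (simp add: Gamma_SO_def r_def)
  also have "\<dots> = chi_factor * l"
    unfolding Gamma_O_def
    using Z_V_odd[OF odd r] l by (intro scalar_of_eq[OF irred_rep_nonzero[OF irr]]) (simp add: mult.assoc)
  finally show ?thesis .
qed

lemma Gamma_SO_even:
  assumes even: "even CARD('n)" and omega: "\<forall>f\<in>W. \<rho> (- mat 1) f = (\<lambda>x. \<omega> * f x)"
    and l: "\<forall>f\<in>W. group_sum_op (sorth_group B) \<rho> j_kernel f = (\<lambda>x. l * f x)"
  shows "Gamma_SO B sq chi W \<rho> = chi_factor * \<omega> * l"
proof (cases "\<exists>r. irred_rep (orth_group B) W r \<and> (\<forall>g\<in>sorth_group B. \<forall>f\<in>W. r g f = \<rho> g f)")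
  case True
  let ?P = "\<lambda>r. irred_rep (orth_group B) W r \<and> (\<forall>g\<in>sorth_group B. \<forall>f\<in>W. r g f = \<rho> g f)"
  define r where "r = (SOME r. ?P r)"
  have "?P r" unfolding r_def using True by (rule someI_ex)
  then have r: "\<forall>g\<in>sorth_group B. \<forall>f\<in>W. r g f = \<rho> g f" by simp
  have "Gamma_SO B sq chi W \<rho> = Gamma_O B sq chi W r"
    using True even by (simp add: Gamma_SO_def r_def)
  also have "\<dots> = chi_factor * \<omega> * l"
    unfolding Gamma_O_def
    using Z_V_even[OF even omega r] l by (intro scalar_of_eq[OF irred_rep_nonzero[OF irr]]) (simp add: mult.assoc)
  finally show ?thesis .
next
  case False
  have "\<not> odd CARD('n)" using even by simp
  then have "Gamma_SO B sq chi W \<rho> = Gamma_O B sq chi (ind_space B W \<rho>) (ind_act B)"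
    unfolding Gamma_SO_def using False by (simp only: if_False)
  also have "\<dots> = chi_factor * \<omega> * l"
    unfolding Gamma_O_def
    using Z_V_induced[OF even omega l] by (intro scalar_of_eq[OF ind_space_nonzero]) simp
  finally show ?thesis .
qed

theorem Gamma_SO_eq:
  "Gamma_SO B sq chi W \<rho> = chi_factor * j_factor B sq chi W \<rho> *
     (if even CARD('n) then central_char W \<rho> (mat (-1)) else 1)"
proof -
  obtain l where l: "\<forall>f\<in>W. group_sum_op (sorth_group B) \<rho> j_kernel f = (\<lambda>x. l * f x)"
    using j_kernel_op_scalar by blast
  show ?thesis
  proof (cases "even CARD('n)")
    case True
    have "- mat 1 \<in> sorth_group B"
      using True by (simp add: uminus_in_sorth_group_iff mat_1_in_orth_group)
    then have "\<exists>\<omega>. \<forall>f\<in>W. \<rho> (- mat 1) f = (\<lambda>x. \<omega> * f x)"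
      by (intro central_element_scalar[OF irr _ matrix_group_sorth_group[OF B_nondeg] _ _ alg_closed])
        (simp_all add: matrix_mul_uminus_left matrix_mul_uminus_right)
    then obtain \<omega> where omega: "\<forall>f\<in>W. \<rho> (- mat 1) f = (\<lambda>x. \<omega> * f x)" by blast
    then have "central_char W \<rho> (mat (-1)) = \<omega>"
      unfolding central_char_def by (simp add: mat_uminus scalar_of_eq[OF irred_rep_nonzero[OF irr]])
    then show ?thesis
      using True Gamma_SO_even[OF True omega l] j_factor_eq_scalar[OF l] by (simp add: mult_ac)
  next
    case False
    then show ?thesis using Gamma_SO_odd[OF _ l] j_factor_eq_scalar[OF l] by simp
  qed
qed

end

theorem mainTheorem11:
  fixes B :: "'f::{finite,field}^'n::finite^'n"
    and sq :: "'c::field"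
    and chi :: "'f \<Rightarrow> 'c"
    and W :: "('x \<Rightarrow> 'c) set"
    and \<rho> :: "'f^'n^'n \<Rightarrow> ('x \<Rightarrow> 'c) \<Rightarrow> ('x \<Rightarrow> 'c)"
  assumes q_odd: "odd CARD('f)"
    and C_alg_closed: "\<forall>p :: 'c poly. 0 < degree p \<longrightarrow> (\<exists>z. poly p z = 0)"
    and C_char: "of_nat CARD('f) \<noteq> (0::'c)"
    and sq: "sq ^ 2 = of_nat CARD('f)"
    and B_sym: "transpose B = B"
    and B_nondeg: "det B \<noteq> 0"
    and chi_mult: "\<forall>a b. a \<noteq> 0 \<longrightarrow> b \<noteq> 0 \<longrightarrow> chi (a * b) = chi a * chi b"
    and chi_nz: "\<forall>a. a \<noteq> 0 \<longrightarrow> chi a \<noteq> 0"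
    and irr: "irred_rep (sorth_group B) W \<rho>"
    and char2: "even CARD('n) \<longrightarrow> (2::'c) \<noteq> 0"
  shows "Gamma_SO B sq chi W \<rho> =
           inverse (chi (-2)) ^ CARD('n) * j_factor B sq chi W \<rho> *
           (if even CARD('n) then central_char W \<rho> (mat (-1)) else 1)"
proof -
  interpret so_rep B sq chi W \<rho>
  proof
    show "(2::'f) \<noteq> 0" using q_odd by (rule two_neq_zero_if_odd_card)
    show "multiplicative_char chi" using chi_mult chi_nz by (simp add: multiplicative_char_def)
  qed (fact B_nondeg irr C_alg_closed)+
  show ?thesis using Gamma_SO_eq by (simp add: chi_factor_def)
qed

end
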